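(* For every $i\in\{0,\ldots,k-n\}$, the boundary of $C_i$ in $\mathcal{F}_{n+1,2d}$ is $$\partial C_i=\{f\in C_i : \text{for every } A\in\mathcal{G}^{-1}(f)\text{ there exists }[z]\in V_i(\mathbb{R})\text{ with } q_A(z)\leq 0\}.$$
   Context: Let $n,d\geq 1$ be integers. $\mathcal{F}_{n+1,l}$ denotes the real vector space of real forms of degree $l$ in $X=(X_0,\ldots,X_n)$, with its Euclidean topology. Let $k:=\binom{n+d}{n}-1$. Order $I_{n+1,d}:=\{\alpha\in\mathbb{N}_0^{n+1}: |\alpha|=d\}$ lexicographically in decreasing order as $\alpha_0,\ldots,\alpha_k$ (so $\alpha_0=(d,0,\ldots,0)$, $\alpha_k=(0,\ldots,0,d)$), and set $m_j(X):=X^{\alpha_j}$. For $A\in\mathrm{Sym}_{k+1}(\mathbb{R})$ let $q_A(Z):=ZAZ^t$, $Z=(Z_0,\ldots,Z_k)$, and let $\mathcal{G}:\mathrm{Sym}_{k+1}(\mathbb{R})\to\mathcal{F}_{n+1,2d}$, $\mathcal{G}(A):=q_A(m_0(X),\ldots,m_k(X))$. For $i\in\{0,\ldots,k-n\}$ let $H_i:=\{[z]\in\mathbb{P}^k(\mathbb{C}) : \exists x\in\mathbb{C}^{n+1},\ (z_0,\ldots,z_{n+i})=(m_0(x),\ldots,m_{n+i}(x))\}$, $V_i$ its Zariski closure in $\mathbb{P}^k$, $V_i(\mathbb{R})$ its real points, and $C_i:=\{f\in\mathcal{F}_{n+1,2d} : \exists A\in\mathcal{G}^{-1}(f),\ q_A(z)\geq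 0\ \forall [z]\in V_i(\mathbb{R})\}$. (The sign of $q_A(z)$ does not depend on the representative $z$ of $[z]$.) *)

theory Defs
  imports "HOL-Analysis.Analysis"
begin

text \<open>Exponent vectors alpha = (alpha_0,...,alpha_m) (zero beyond index m) of total degree l,
  i.e. the index set I_{m+1,l}.\<close>
definition exps :: "nat \<Rightarrow> nat \<Rightarrow> (nat \<Rightarrow> nat) set" where
  "exps m l = {\<alpha>. (\<forall>i>m. \<alpha> i = 0) \<and> (\<Sum>i\<le>m. \<alpha> i) = l}"

definition lex_gt :: "nat \<Rightarrow> (nat \<Rightarrow> nat) \<Rightarrow> (nat \<Rightarrow> nat) \<Rightarrow> bool" where
  "lex_gt m \<alpha> \<beta> \<longleftrightarrow> (\<exists>i\<le>m. (\<forall>l<i. \<alpha> l = \<beta> l) \<and> \<alpha> i > \<beta> i)"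

definition kdim :: "nat \<Rightarrow> nat \<Rightarrow> nat" where
  "kdim n d = (n + d choose n) - 1"

text \<open>alpha_j: the j-th element of I_{n+1,d} in decreasing lexicographic order
  (the unique element having exactly j elements lexicographically greater than it).\<close>
definition mon_exp :: "nat \<Rightarrow> nat \<Rightarrow> nat \<Rightarrow> (nat \<Rightarrow> nat)" where
  "mon_exp n d j = (THE \<alpha>. \<alpha> \<in> exps n d \<and> card {\<beta> \<in> exps n d. lex_gt n \<beta> \<alpha>} = j)"

definition mon :: "nat \<Rightarrow> nat \<Rightarrow> nat \<Rightarrow> (nat \<Rightarrow> 'a) \<Rightarrow> 'a::comm_semiring_1" where
  "mon n d j x = (\<Prod>l\<le>n. x l ^ mon_exp n d j l)"

text \<open>F_{n+1,l}: real forms of degree l in X_0..X_n, represented by their coefficient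
  functions (coefficient of X^gamma), supported on I_{n+1,l}.  The topology is the
  subspace topology of the product topology, which is the Euclidean topology.\<close>
definition forms :: "nat \<Rightarrow> nat \<Rightarrow> ((nat \<Rightarrow> nat) \<Rightarrow> real) set" where
  "forms n l = {f. \<forall>\<gamma>. \<gamma> \<notin> exps n l \<longrightarrow> f \<gamma> = 0}"

definition symmat :: "nat \<Rightarrow> (nat \<Rightarrow> nat \<Rightarrow> real) set" where
  "symmat k = {A. (\<forall>i j. A i j = A j i) \<and> (\<forall>i j. (k < i \<or> k < j) \<longrightarrow> A i j = 0)}"

definition qform :: "nat \<Rightarrow> (nat \<Rightarrow> nat \<Rightarrow> real) \<Rightarrow> (nat \<Rightarrow> real) \<Rightarrow> real" where
  "qform k A z = (\<Sum>a\<le>k. \<Sum>b\<le>k. z a * A a b * z b)"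

text \<open>G(A) = q_A(m_0(X),...,m_k(X)), given by its coefficient function:
  the coefficient of X^gamma is the sum of A_ab over alpha_a + alpha_b = gamma.\<close>
definition Gmap :: "nat \<Rightarrow> nat \<Rightarrow> (nat \<Rightarrow> nat \<Rightarrow> real) \<Rightarrow> ((nat \<Rightarrow> nat) \<Rightarrow> real)" where
  "Gmap n d A = (\<lambda>\<gamma>. \<Sum>(a,b) \<in> {(a,b). a \<le> kdim n d \<and> b \<le> kdim n d \<and>
                      (\<lambda>l. mon_exp n d a l + mon_exp n d b l) = \<gamma>}. A a b)"

text \<open>Affine cone over H_i in C^{k+1} minus 0 (vectors zero beyond index k).\<close>
definition Hcone :: "nat \<Rightarrow> nat \<Rightarrow> nat \<Rightarrow> (nat \<Rightarrow> complex) set" where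
  "Hcone n d i = {z. (\<forall>l>kdim n d. z l = 0) \<and> (\<exists>l\<le>kdim n d. z l \<noteq> 0) \<and>
                     (\<exists>x::nat \<Rightarrow> complex. \<forall>l\<le>n+i. z l = mon n d l x)}"

definition hpeval :: "nat \<Rightarrow> nat \<Rightarrow> ((nat \<Rightarrow> nat) \<Rightarrow> complex) \<Rightarrow> (nat \<Rightarrow> complex) \<Rightarrow> complex" where
  "hpeval m e p z = (\<Sum>\<beta>\<in>exps m e. p \<beta> * (\<Prod>l\<le>m. z l ^ \<beta> l))"

text \<open>V_i(R): real points of the Zariski closure V_i of H_i in P^k, given by their real
  representatives z in R^{k+1} minus 0: all homogeneous polynomials vanishing on H_i vanish at z.\<close>
definition Vreal :: "nat \<Rightarrow> nat \<Rightarrow> nat \<Rightarrow> (nat \<Rightarrow> real) set" where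
  "Vreal n d i = {z. (\<forall>l>kdim n d. z l = 0) \<and> (\<exists>l\<le>kdim n d. z l \<noteq> 0) \<and>
     (\<forall>e p. (\<forall>w\<in>Hcone n d i. hpeval (kdim n d) e p w = 0) \<longrightarrow>
            hpeval (kdim n d) e p (\<lambda>l. complex_of_real (z l)) = 0)}"

definition Ccone :: "nat \<Rightarrow> nat \<Rightarrow> nat \<Rightarrow> ((nat \<Rightarrow> nat) \<Rightarrow> real) set" where
  "Ccone n d i = {f \<in> forms n (2*d). \<exists>A\<in>symmat (kdim n d). Gmap n d A = f \<and>
                    (\<forall>z\<in>Vreal n d i. qform (kdim n d) A z \<ge> 0)}"

end

theory Submission
  imports Defs "HOL-Computational_Algebra.Polynomial"
begin

text \<open>
  Let \<open>P\<close> be the set of symmetric matrices \<open>A\<close> with \<open>q\<^sub>A \<ge> 0\<close> on \<open>V\<^sub>i(\<real>)\<close>, so that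
  \<open>C\<^sub>i = \<G>(P)\<close>.  The boundary is the closure minus the interior, so it suffices to show that
  \<open>C\<^sub>i\<close> is closed and that its interior consists of the forms \<open>\<G>(A)\<close> with \<open>q\<^sub>A > 0\<close> on
  \<open>V\<^sub>i(\<real>)\<close>.  If \<open>q\<^sub>A > 0\<close> there, then by compactness \<open>q\<^sub>A \<ge> c |z|\<^sup>2\<close>, and since \<open>\<G>\<close> has a
  bounded right inverse every nearby form is \<open>\<G>(A + D)\<close> with \<open>q\<^sub>A\<^sub>+\<^sub>D \<ge> 0\<close>.  Conversely, if \<open>f\<close> is
  interior then \<open>f - \<epsilon> \<G>(I) = \<G>(B)\<close> with \<open>B \<in> P\<close>, and \<open>q\<^sub>B\<^sub>+\<^sub>\<epsilon>\<^sub>I > 0\<close> on \<open>V\<^sub>i(\<real>)\<close>.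

  Closedness rests on the fact that every \<open>A \<in> P\<close> with \<open>\<G>(A) = 0\<close> has \<open>q\<^sub>A = 0\<close> on \<open>V\<^sub>i\<close>:
  \<open>q\<^sub>A\<close> vanishes at the points \<open>(m\<^sub>0(x), \<dots>, m\<^sub>k(x))\<close>, and \<open>V\<^sub>i(\<real>)\<close> contains these points perturbed in
  any coordinate \<open>Z\<^sub>j\<close> with \<open>j > n + i\<close>, so nonnegativity forces \<open>q\<^sub>A\<close> to involve only
  \<open>Z\<^sub>0, \<dots>, Z\<^sub>n\<^sub>+\<^sub>i\<close>; such a form vanishes on \<open>H\<^sub>i\<close>, hence on \<open>V\<^sub>i\<close>.  Hence
  representatives can be shifted by such kernel elements, which yields a Hoffman-type bound
  on the size of representatives, and limits of bounded representatives stay in \<open>P\<close>.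
\<close>

section \<open>Exponent vectors and the lexicographic order\<close>

lemma exps_zero: "\<alpha> \<in> exps m l \<Longrightarrow> m < i \<Longrightarrow> \<alpha> i = 0"
  by (auto simp: exps_def)

lemma exps_sum: "\<alpha> \<in> exps m l \<Longrightarrow> (\<Sum>i\<le>m. \<alpha> i) = l"
  by (auto simp: exps_def)

lemma exps_eqI: "\<alpha> \<in> exps m l \<Longrightarrow> \<beta> \<in> exps m l' \<Longrightarrow> (\<And>i. i \<le> m \<Longrightarrow> \<alpha> i = \<beta> i) \<Longrightarrow> \<alpha> = \<beta>"
  by (rule ext) (metis exps_zero not_le)

lemma exps_add: "\<alpha> \<in> exps m l \<Longrightarrow> \<beta> \<in> exps m l' \<Longrightarrow> (\<lambda>i. \<alpha> i + \<beta> i) \<in> exps m (l + l')"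
  by (auto simp: exps_def sum.distrib)

lemma sum_list_map_upt: "sum_list (map (f::nat \<Rightarrow> nat) [0..<Suc m]) = sum f {..m}"
  by (induction m) auto

lemma bij_betw_exps_lists:
  "bij_betw (\<lambda>\<alpha>. map \<alpha> [0..<Suc m]) (exps m l) {xs. length xs = Suc m \<and> sum_list xs = l}"
proof (rule bij_betw_imageI)
  show "inj_on (\<lambda>\<alpha>. map \<alpha> [0..<Suc m]) (exps m l)"
    by (rule inj_onI, erule (1) exps_eqI) (metis atLeastLessThan_iff le_imp_less_Suc map_eq_conv set_upt zero_le)
  have "xs \<in> (\<lambda>\<alpha>. map \<alpha> [0..<Suc m]) ` exps m l" if "length xs = Suc m" "sum_list xs = l" for xs
  proof -
    define \<alpha> where "\<alpha> = (\<lambda>i. if i \<le> m then xs ! i else 0)"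
    have xs: "map \<alpha> [0..<Suc m] = xs"
      using that by (intro nth_equalityI) (auto simp: \<alpha>_def simp del: upt_Suc)
    then have "(\<Sum>i\<le>m. \<alpha> i) = l"
      using that by (simp flip: sum_list_map_upt)
    then have "\<alpha> \<in> exps m l" by (auto simp: exps_def \<alpha>_def)
    with xs show ?thesis by blast
  qed
  then show "(\<lambda>\<alpha>. map \<alpha> [0..<Suc m]) ` exps m l = {xs. length xs = Suc m \<and> sum_list xs = l}"
    by (auto simp: exps_def sum_list_map_upt simp del: upt_Suc)
qed

lemma card_exps: "card (exps m l) = (m + l choose m)"
proof -
  have "card (exps m l) = card {xs::nat list. length xs = Suc m \<and> sum_list xs = l}"
    using bij_betw_same_card[OF bij_betw_exps_lists] .
  also have "\<dots> = (l + Suc m - 1) choose l" by (rule card_length_sum_list)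
  also have "\<dots> = (m + l choose m)"
    using binomial_symmetric[of l "m + l"] by (simp add: add.commute)
  finally show ?thesis .
qed

lemma finite_exps: "finite (exps m l)"
  using card_exps[of m l] by (intro card_ge_0_finite) simp

lemma bij_betw_card_less:
  assumes "finite S"
    and irrefl: "\<And>x. x \<in> S \<Longrightarrow> \<not> R x x"
    and trans: "\<And>x y z. x \<in> S \<Longrightarrow> y \<in> S \<Longrightarrow> z \<in> S \<Longrightarrow> R x y \<Longrightarrow> R y z \<Longrightarrow> R x z"
    and total: "\<And>x y. x \<in> S \<Longrightarrow> y \<in> S \<Longrightarrow> x \<noteq> y \<Longrightarrow> R x y \<or> R y x"
  shows "bij_betw (\<lambda>x. card {y \<in> S. R y x}) S {..<card S}"
proof -
  let ?r = "\<lambda>x. card {y \<in> S. R y x}"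
  have less: "?r x < card S" if "x \<in> S" for x
    using that irrefl by (intro psubset_card_mono \<open>finite S\<close>) blast
  have mono: "?r x < ?r y" if "x \<in> S" "y \<in> S" "R x y" for x y
  proof (rule psubset_card_mono)
    show "finite {z \<in> S. R z y}" using \<open>finite S\<close> by simp
    show "{z \<in> S. R z x} \<subset> {z \<in> S. R z y}" using that irrefl trans by blast
  qed
  have inj: "inj_on ?r S"
  proof (rule inj_onI, rule ccontr)
    fix x y assume "x \<in> S" "y \<in> S" "?r x = ?r y" "x \<noteq> y"
    then show False using total[of x y] mono[of x y] mono[of y x] by auto
  qed
  then have "card (?r ` S) = card {..<card S}"
    by (simp add: card_image)
  then have "?r ` S = {..<card S}"
    using less by (intro card_subset_eq) auto
  with inj show ?thesis
    by (simp add: bij_betw_def)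
qed

lemma lex_gt_irrefl: "\<not> lex_gt m \<alpha> \<alpha>"
  by (auto simp: lex_gt_def)

lemma lex_gt_trans: "lex_gt m \<alpha> \<beta> \<Longrightarrow> lex_gt m \<beta> \<gamma> \<Longrightarrow> lex_gt m \<alpha> \<gamma>"
  unfolding lex_gt_def
proof (elim exE conjE)
  fix i j assume i: "i \<le> m" "\<forall>l<i. \<alpha> l = \<beta> l" "\<beta> i < \<alpha> i"
    and j: "j \<le> m" "\<forall>l<j. \<beta> l = \<gamma> l" "\<gamma> j < \<beta> j"
  show "\<exists>i\<le>m. (\<forall>l<i. \<alpha> l = \<gamma> l) \<and> \<gamma> i < \<alpha> i"
  proof (cases i j rule: linorder_cases)
    case less then show ?thesis using i j by (intro exI[of _ i]) auto
  next
    case equal then show ?thesis using i j by (intro exI[of _ i]) auto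
  next
    case greater then show ?thesis using i j by (intro exI[of _ j]) auto
  qed
qed

lemma lex_gt_total:
  assumes "\<alpha> \<noteq> \<beta>" "\<forall>i>m. \<alpha> i = 0" "\<forall>i>m. \<beta> i = 0"
  shows "lex_gt m \<alpha> \<beta> \<or> lex_gt m \<beta> \<alpha>"
proof -
  define j where "j = (LEAST i. \<alpha> i \<noteq> \<beta> i)"
  have j: "\<alpha> j \<noteq> \<beta> j" "\<forall>l<j. \<alpha> l = \<beta> l"
    using assms(1) LeastI_ex[of "\<lambda>i. \<alpha> i \<noteq> \<beta> i"] not_less_Least
    by (auto simp: j_def fun_eq_iff)
  then have "j \<le> m" using assms(2,3) by (metis not_le)
  with j show ?thesis unfolding lex_gt_def by (metis nat_neq_iff)
qed

text \<open>\<^const>\<open>mon_exp\<close> is the inverse of the rank function of the lexicographic order.\<close>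
lemma mon_exp_bij: "bij_betw (mon_exp n d) {..kdim n d} (exps n d)"
proof -
  let ?r = "\<lambda>\<alpha>. card {\<beta> \<in> exps n d. lex_gt n \<beta> \<alpha>}"
  have "bij_betw ?r (exps n d) {..<card (exps n d)}"
  proof (rule bij_betw_card_less)
    show "\<And>\<alpha> \<beta>. \<alpha> \<in> exps n d \<Longrightarrow> \<beta> \<in> exps n d \<Longrightarrow> \<alpha> \<noteq> \<beta> \<Longrightarrow> lex_gt n \<alpha> \<beta> \<or> lex_gt n \<beta> \<alpha>"
      by (rule lex_gt_total) (auto simp: exps_def)
  qed (auto simp: finite_exps lex_gt_irrefl intro: lex_gt_trans)
  then have "bij_betw (the_inv_into (exps n d) ?r) {..<card (exps n d)} (exps n d)"
    by (rule bij_betw_the_inv_into)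
  moreover have "the_inv_into (exps n d) ?r = mon_exp n d"
    by (simp add: the_inv_into_def mon_exp_def fun_eq_iff)
  moreover have "{..<card (exps n d)} = {..kdim n d}"
    by (simp add: card_exps kdim_def lessThan_Suc_atMost[symmetric])
  ultimately show ?thesis by simp
qed

lemma mon_exp_in_exps: "j \<le> kdim n d \<Longrightarrow> mon_exp n d j \<in> exps n d"
  using mon_exp_bij by (blast dest: bij_betwE)

lemma mon_exp_surj: "\<alpha> \<in> exps n d \<Longrightarrow> \<exists>a\<le>kdim n d. mon_exp n d a = \<alpha>"
  using bij_betw_imp_surj_on[OF mon_exp_bij, of n d] by force

section \<open>Linear independence of the monomials\<close>

lemma sum_power_eq_zero_imp_coeff_zero:
  fixes a :: "nat \<Rightarrow> real"
  assumes "finite Ks" "\<And>t. (\<Sum>k\<in>Ks. a k * t ^ k) = 0" "k \<in> Ks"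
  shows "a k = 0"
proof -
  define p where "p = (\<Sum>k\<in>Ks. monom (a k) k)"
  have "poly p t = 0" for t
    using assms(2) by (simp add: p_def poly_sum poly_monom)
  then have "p = 0" using poly_all_0_iff_0 by blast
  have "coeff p k = (\<Sum>k'\<in>Ks. if k' = k then a k' else 0)"
    unfolding p_def coeff_sum by (intro sum.cong refl) (simp add: coeff_monom)
  also have "\<dots> = a k" using assms(1,3) by (simp add: sum.delta)
  finally show ?thesis using \<open>p = 0\<close> by simp
qed

text \<open>Induction on the number \<open>m\<close> of variables, grouping the terms by their exponent of the
  last variable.\<close>
lemma sum_monomials_eq_zero_imp_coeffs_zero:
  fixes c :: "(nat \<Rightarrow> nat) \<Rightarrow> real"
  assumes "finite F" "\<And>\<alpha> \<beta>. \<alpha> \<in> F \<Longrightarrow> \<beta> \<in> F \<Longrightarrow> (\<forall>l<m. \<alpha> l = \<beta> l) \<Longrightarrow> \<alpha> = \<beta>"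
    and "\<And>x. (\<Sum>\<alpha>\<in>F. c \<alpha> * (\<Prod>l<m. x l ^ \<alpha> l)) = 0" and "\<alpha>0 \<in> F"
  shows "c \<alpha>0 = 0"
  using assms
proof (induction m arbitrary: F \<alpha>0)
  case 0
  then have "F = {\<alpha>0}" by auto
  then show ?case using "0.prems"(3) by simp
next
  case (Suc m)
  define D where "D = (\<lambda>k x. \<Sum>\<alpha>\<in>{\<alpha>\<in>F. \<alpha> m = k}. c \<alpha> * (\<Prod>l<m. x l ^ \<alpha> l))"
  have group: "(\<Sum>\<alpha>\<in>F. c \<alpha> * (\<Prod>l<Suc m. x l ^ \<alpha> l)) = (\<Sum>k\<in>(\<lambda>\<alpha>. \<alpha> m) ` F. D k x * x m ^ k)" for x
  proof -
    have "(\<Sum>\<alpha>\<in>F. c \<alpha> * (\<Prod>l<Suc m. x l ^ \<alpha> l)) =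
          (\<Sum>k\<in>(\<lambda>\<alpha>. \<alpha> m) ` F. \<Sum>\<alpha>\<in>{\<alpha>\<in>F. \<alpha> m = k}. c \<alpha> * (\<Prod>l<Suc m. x l ^ \<alpha> l))"
      by (rule sum.image_gen) (rule Suc.prems(1))
    also have "\<dots> = (\<Sum>k\<in>(\<lambda>\<alpha>. \<alpha> m) ` F. D k x * x m ^ k)"
      unfolding D_def sum_distrib_right by (intro sum.cong refl) (simp add: mult.assoc)
    finally show ?thesis .
  qed
  have "D (\<alpha>0 m) x = 0" for x
  proof (rule sum_power_eq_zero_imp_coeff_zero)
    fix t
    have D_upd: "D k (x(m := t)) = D k x" for k
      unfolding D_def by (intro sum.cong refl) simp
    have "(\<Sum>k\<in>(\<lambda>\<alpha>. \<alpha> m) ` F. D k x * t ^ k) = (\<Sum>\<alpha>\<in>F. c \<alpha> * (\<Prod>l<Suc m. (x(m := t)) l ^ \<alpha> l))"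
      unfolding group fun_upd_same D_upd ..
    also have "\<dots> = 0" by (rule Suc.prems(3))
    finally show "(\<Sum>k\<in>(\<lambda>\<alpha>. \<alpha> m) ` F. D k x * t ^ k) = 0" .
  qed (use Suc.prems(1,4) in auto)
  then show ?case
    unfolding D_def using Suc.prems(1,2,4)
    by (intro Suc.IH[of "{\<alpha>\<in>F. \<alpha> m = \<alpha>0 m}"]) (auto simp: less_Suc_eq)
qed

lemma mon_linear_independent:
  assumes "\<And>x::nat \<Rightarrow> real. (\<Sum>b\<le>kdim n d. c b * mon n d b x) = 0" "b \<le> kdim n d"
  shows "c b = 0"
proof -
  let ?\<iota> = "the_inv_into {..kdim n d} (mon_exp n d)"
  have "c (?\<iota> (mon_exp n d b)) = 0"
  proof (rule sum_monomials_eq_zero_imp_coeffs_zero[where m = "Suc n" and F = "exps n d" and c = "\<lambda>\<alpha>. c (?\<iota> \<alpha>)"])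
    fix x :: "nat \<Rightarrow> real"
    have "(\<Sum>\<alpha>\<in>exps n d. c (?\<iota> \<alpha>) * (\<Prod>l<Suc n. x l ^ \<alpha> l)) =
          (\<Sum>b\<le>kdim n d. c (?\<iota> (mon_exp n d b)) * (\<Prod>l<Suc n. x l ^ mon_exp n d b l))"
      using sum.reindex_bij_betw[OF mon_exp_bij, of "\<lambda>\<alpha>. c (?\<iota> \<alpha>) * (\<Prod>l<Suc n. x l ^ \<alpha> l)"]
      by simp
    also have "\<dots> = (\<Sum>b\<le>kdim n d. c b * mon n d b x)"
      using mon_exp_bij by (intro sum.cong refl)
        (simp add: the_inv_into_f_f bij_betw_def mon_def lessThan_Suc_atMost)
    finally show "(\<Sum>\<alpha>\<in>exps n d. c (?\<iota> \<alpha>) * (\<Prod>l<Suc n. x l ^ \<alpha> l)) = 0"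
      using assms(1) by simp
  qed (use exps_eqI mon_exp_in_exps assms(2) in \<open>auto simp: finite_exps less_Suc_eq_le\<close>)
  then show ?thesis
    using mon_exp_bij assms(2) by (simp add: the_inv_into_f_f bij_betw_def)
qed

section \<open>The map \<open>\<G>\<close>\<close>

lemma exists_exp_le_sum:
  fixes \<gamma> :: "nat \<Rightarrow> nat"
  assumes "\<forall>i>m. \<gamma> i = 0" "s \<le> (\<Sum>i\<le>m. \<gamma> i)"
  shows "\<exists>\<alpha>. (\<forall>i. \<alpha> i \<le> \<gamma> i) \<and> (\<forall>i>m. \<alpha> i = 0) \<and> (\<Sum>i\<le>m. \<alpha> i) = s"
  using assms
proof (induction m arbitrary: \<gamma> s)
  case 0
  then show ?case by (intro exI[of _ "\<lambda>i. if i = 0 then s else 0"]) auto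
next
  case (Suc m)
  define t where "t = min s (\<gamma> (Suc m))"
  have "s - t \<le> (\<Sum>i\<le>m. (\<gamma>(Suc m := 0)) i)" "\<forall>i>m. (\<gamma>(Suc m := 0)) i = 0"
    using Suc.prems by (auto simp: t_def)
  then obtain \<alpha> where \<alpha>: "\<forall>i. \<alpha> i \<le> (\<gamma>(Suc m := 0)) i" "\<forall>i>m. \<alpha> i = 0" "(\<Sum>i\<le>m. \<alpha> i) = s - t"
    using Suc.IH by blast
  have "(\<Sum>i\<le>m. (\<alpha>(Suc m := t)) i) = (\<Sum>i\<le>m. \<alpha> i)" by (intro sum.cong) auto
  with \<alpha> show ?case
    by (intro exI[of _ "\<alpha>(Suc m := t)"]) (auto simp: t_def split: if_splits)
qed

lemma exps_double_split:
  assumes "\<gamma> \<in> exps n (2*d)"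
  obtains \<alpha> \<beta> where "\<alpha> \<in> exps n d" "\<beta> \<in> exps n d" "(\<lambda>l. \<alpha> l + \<beta> l) = \<gamma>"
proof -
  obtain \<alpha> where \<alpha>: "\<forall>i. \<alpha> i \<le> \<gamma> i" "\<forall>i>n. \<alpha> i = 0" "(\<Sum>i\<le>n. \<alpha> i) = d"
    using exists_exp_le_sum[of n \<gamma> d] assms by (auto simp: exps_def)
  have "(\<Sum>i\<le>n. \<gamma> i - \<alpha> i) = (\<Sum>i\<le>n. \<gamma> i) - (\<Sum>i\<le>n. \<alpha> i)"
    using \<alpha>(1) by (simp add: sum_subtractf_nat)
  then have "(\<lambda>i. \<gamma> i - \<alpha> i) \<in> exps n d" using assms \<alpha> by (auto simp: exps_def)
  moreover have "\<alpha> \<in> exps n d" using \<alpha> by (auto simp: exps_def)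
  moreover have "(\<lambda>l. \<alpha> l + (\<gamma> l - \<alpha> l)) = \<gamma>" using \<alpha>(1) by (simp add: le_add_diff_inverse)
  ultimately show ?thesis using that by blast
qed

definition mat_l1 :: "nat \<Rightarrow> (nat \<Rightarrow> nat \<Rightarrow> real) \<Rightarrow> real" where
  "mat_l1 K A = (\<Sum>a\<le>K. \<Sum>b\<le>K. \<bar>A a b\<bar>)"

definition form_l1 :: "nat \<Rightarrow> nat \<Rightarrow> ((nat \<Rightarrow> nat) \<Rightarrow> real) \<Rightarrow> real" where
  "form_l1 n l g = (\<Sum>\<gamma>\<in>exps n l. \<bar>g \<gamma>\<bar>)"

definition sq_norm :: "nat \<Rightarrow> (nat \<Rightarrow> real) \<Rightarrow> real" where
  "sq_norm K z = (\<Sum>l\<le>K. (z l)\<^sup>2)"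

lemma Gmap_forms: "Gmap n d A \<in> forms n (2*d)"
proof -
  have "Gmap n d A \<gamma> = 0" if "\<gamma> \<notin> exps n (2*d)" for \<gamma>
  proof -
    have "(\<lambda>l. mon_exp n d a l + mon_exp n d b l) \<noteq> \<gamma>" if "a \<le> kdim n d" "b \<le> kdim n d" for a b
      using exps_add[OF mon_exp_in_exps mon_exp_in_exps, OF that] \<open>\<gamma> \<notin> exps n (2*d)\<close>
      by (auto simp: mult_2)
    then show ?thesis unfolding Gmap_def by (auto intro: sum.neutral)
  qed
  then show ?thesis by (auto simp: forms_def)
qed

lemma Gmap_add: "Gmap n d (\<lambda>a b. A a b + c * B a b) \<gamma> = Gmap n d A \<gamma> + c * Gmap n d B \<gamma>"
  unfolding Gmap_def by (simp add: case_prod_unfold sum.distrib sum_distrib_left)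

lemma Gmap_scale: "Gmap n d (\<lambda>a b. c * B a b) \<gamma> = c * Gmap n d B \<gamma>"
  unfolding Gmap_def by (simp add: case_prod_unfold sum_distrib_left)

lemma Gmap_sum: "Gmap n d (\<lambda>a b. \<Sum>j\<in>J. c j * B j a b) \<gamma> = (\<Sum>j\<in>J. c j * Gmap n d (B j) \<gamma>)"
  unfolding Gmap_def case_prod_unfold sum_distrib_left by (rule sum.swap)

lemma Gmap_tendsto:
  assumes "\<forall>a\<le>kdim n d. \<forall>b\<le>kdim n d. (\<lambda>m. A m a b) \<longlonglongrightarrow> B a b"
  shows "(\<lambda>m. Gmap n d (A m) \<gamma>) \<longlonglongrightarrow> Gmap n d B \<gamma>"
  unfolding Gmap_def case_prod_unfold using assms by (intro tendsto_sum) auto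

lemma Gmap_entry:
  assumes "a \<le> kdim n d" "b \<le> kdim n d"
  shows "Gmap n d (\<lambda>x y. if x = a \<and> y = b then 1 else 0) \<gamma> =
    (if (\<lambda>l. mon_exp n d a l + mon_exp n d b l) = \<gamma> then 1 else 0)"
proof -
  let ?S = "{(x,y). x \<le> kdim n d \<and> y \<le> kdim n d \<and> (\<lambda>l. mon_exp n d x l + mon_exp n d y l) = \<gamma>}"
  have "finite ?S" by (rule finite_subset[of _ "{..kdim n d} \<times> {..kdim n d}"]) auto
  then have "(\<Sum>p\<in>?S. if p = (a,b) then 1 else 0) = (if (a,b) \<in> ?S then 1 else (0::real))"
    by (rule sum.delta)
  then show ?thesis using assms unfolding Gmap_def by (simp add: case_prod_unfold prod_eq_iff)
qed

definition sym_unit :: "nat \<Rightarrow> nat \<Rightarrow> nat \<Rightarrow> nat \<Rightarrow> real" where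
  "sym_unit a b = (\<lambda>x y. 1/2 * (if x = a \<and> y = b then 1 else 0) + 1/2 * (if x = b \<and> y = a then 1 else 0))"

lemma sym_unit_symmat:
  assumes "a \<le> K" "b \<le> K"
  shows "sym_unit a b \<in> symmat K"
proof -
  have "sym_unit a b x y = sym_unit a b y x" for x y
    unfolding sym_unit_def by (simp add: conj_commute add.commute)
  moreover have "sym_unit a b x y = 0" if "K < x \<or> K < y" for x y
  proof -
    have "\<not> (x = a \<and> y = b)" "\<not> (x = b \<and> y = a)" using that assms by auto
    then show ?thesis unfolding sym_unit_def by (simp only: if_False mult_zero_right add_0)
  qed
  ultimately show ?thesis unfolding symmat_def by blast
qed

lemma mat_l1_sym_unit:
  assumes "a \<le> K" "b \<le> K"
  shows "mat_l1 K (sym_unit a b) = 1"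
proof -
  have unit_sum: "(\<Sum>x\<le>K. \<Sum>y\<le>K. if x = a' \<and> y = b' then 1 else 0) = (1::real)"
    if "a' \<le> K" "b' \<le> K" for a' b'
  proof -
    have "(\<Sum>y\<le>K. if x = a' \<and> y = b' then 1 else 0) = (if x = a' then 1 else (0::real))" for x
      using that by simp
    then show ?thesis using that by simp
  qed
  have "\<bar>sym_unit a b x y\<bar> = sym_unit a b x y" for x y
    unfolding sym_unit_def by (intro abs_of_nonneg add_nonneg_nonneg) simp_all
  then have "mat_l1 K (sym_unit a b) = (\<Sum>x\<le>K. \<Sum>y\<le>K. sym_unit a b x y)"
    unfolding mat_l1_def by presburger
  also have "\<dots> = 1/2 * (\<Sum>x\<le>K. \<Sum>y\<le>K. if x = a \<and> y = b then 1 else 0)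
      + 1/2 * (\<Sum>x\<le>K. \<Sum>y\<le>K. if x = b \<and> y = a then 1 else 0)"
    unfolding sym_unit_def by (simp only: sum.distrib sum_distrib_left)
  also have "\<dots> = 1"
    using unit_sum[OF assms] unit_sum[OF assms(2,1)] by simp
  finally show ?thesis .
qed

lemma Gmap_sym_unit:
  assumes "a \<le> kdim n d" "b \<le> kdim n d"
  shows "Gmap n d (sym_unit a b) \<gamma> = (if (\<lambda>l. mon_exp n d a l + mon_exp n d b l) = \<gamma> then 1 else 0)"
proof -
  have "(\<lambda>l. mon_exp n d b l + mon_exp n d a l) = (\<lambda>l. mon_exp n d a l + mon_exp n d b l)"
    by (simp add: add.commute)
  then show ?thesis
    unfolding sym_unit_def Gmap_add[of n d "\<lambda>x y. 1/2 * (if x = a \<and> y = b then 1 else 0)", unfolded Gmap_scale]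
    by (simp add: Gmap_entry assms)
qed

lemma Gmap_monomial_preimage:
  assumes "\<gamma> \<in> exps n (2*d)"
  obtains E where "E \<in> symmat (kdim n d)" "\<And>\<gamma>'. Gmap n d E \<gamma>' = (if \<gamma>' = \<gamma> then 1 else 0)"
    "mat_l1 (kdim n d) E \<le> 1"
proof -
  obtain \<alpha> \<beta> where \<alpha>\<beta>: "\<alpha> \<in> exps n d" "\<beta> \<in> exps n d" "(\<lambda>l. \<alpha> l + \<beta> l) = \<gamma>"
    using exps_double_split[OF assms] .
  obtain a where a: "a \<le> kdim n d" "mon_exp n d a = \<alpha>"
    using mon_exp_surj[OF \<alpha>\<beta>(1)] by blast
  obtain b where b: "b \<le> kdim n d" "mon_exp n d b = \<beta>"
    using mon_exp_surj[OF \<alpha>\<beta>(2)] by blast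
  show ?thesis
  proof (rule that[of "sym_unit a b"])
    show "sym_unit a b \<in> symmat (kdim n d)" using a(1) b(1) by (rule sym_unit_symmat)
    show "Gmap n d (sym_unit a b) \<gamma>' = (if \<gamma>' = \<gamma> then 1 else 0)" for \<gamma>'
      using a b \<alpha>\<beta>(3) by (auto simp: Gmap_sym_unit)
    show "mat_l1 (kdim n d) (sym_unit a b) \<le> 1" using a(1) b(1) by (simp add: mat_l1_sym_unit)
  qed
qed

lemma mon_mult_mon:
  "mon n d a x * mon n d b x = (\<Prod>l\<le>n. x l ^ (mon_exp n d a l + mon_exp n d b l))"
  by (simp add: mon_def power_add prod.distrib)

lemma qform_mon_Gmap:
  fixes x :: "nat \<Rightarrow> 'a::{comm_ring_1,real_algebra_1}"
  shows "(\<Sum>a\<le>kdim n d. \<Sum>b\<le>kdim n d. mon n d a x * of_real (A a b) * mon n d b x) =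
    (\<Sum>\<gamma>\<in>exps n (2*d). of_real (Gmap n d A \<gamma>) * (\<Prod>l\<le>n. x l ^ \<gamma> l))"
proof -
  let ?S = "{..kdim n d} \<times> {..kdim n d}"
  let ?h = "\<lambda>(a,b). \<lambda>l. mon_exp n d a l + mon_exp n d b l"
  let ?g = "\<lambda>p. of_real (A (fst p) (snd p)) * (\<Prod>l\<le>n. x l ^ ?h p l)"
  have "(\<Sum>a\<le>kdim n d. \<Sum>b\<le>kdim n d. mon n d a x * of_real (A a b) * mon n d b x) = (\<Sum>p\<in>?S. ?g p)"
    by (simp add: sum.cartesian_product case_prod_unfold mon_mult_mon[symmetric] mult_ac)
  also have "\<dots> = (\<Sum>\<gamma>\<in>exps n (2*d). \<Sum>p\<in>{p\<in>?S. ?h p = \<gamma>}. ?g p)"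
  proof (rule sum.group[symmetric])
    show "?h ` ?S \<subseteq> exps n (2*d)"
      using exps_add[OF mon_exp_in_exps mon_exp_in_exps] by (auto simp: mult_2)
  qed (auto simp: finite_exps)
  also have "\<dots> = (\<Sum>\<gamma>\<in>exps n (2*d). of_real (Gmap n d A \<gamma>) * (\<Prod>l\<le>n. x l ^ \<gamma> l))"
  proof (intro sum.cong refl)
    fix \<gamma>
    have "{p\<in>?S. ?h p = \<gamma>} = {(a,b). a \<le> kdim n d \<and> b \<le> kdim n d \<and> (\<lambda>l. mon_exp n d a l + mon_exp n d b l) = \<gamma>}"
      by auto
    then show "(\<Sum>p\<in>{p\<in>?S. ?h p = \<gamma>}. ?g p) = of_real (Gmap n d A \<gamma>) * (\<Prod>l\<le>n. x l ^ \<gamma> l)"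
      unfolding Gmap_def by (auto simp: sum_distrib_right case_prod_unfold intro!: sum.cong)
  qed
  finally show ?thesis .
qed

section \<open>Quadratic forms\<close>

lemma qform_cong: "(\<And>l. l \<le> K \<Longrightarrow> z l = z' l) \<Longrightarrow> qform K A z = qform K A z'"
  unfolding qform_def by (intro sum.cong refl) auto

lemma qform_add: "qform K (\<lambda>a b. A a b + c * B a b) z = qform K A z + c * qform K B z"
  unfolding qform_def by (simp add: algebra_simps sum.distrib sum_distrib_left)

lemma qform_scale: "qform K A (\<lambda>l. t * z l) = t\<^sup>2 * qform K A z"
  unfolding qform_def by (simp add: sum_distrib_left power2_eq_square mult_ac)

lemma qform_eq_sq_norm: "qform K (\<lambda>a b. if a = b \<and> a \<le> K then 1 else 0) z = sq_norm K z"
proof -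
  have "qform K (\<lambda>a b. if a = b \<and> a \<le> K then 1 else 0) z = (\<Sum>a\<le>K. \<Sum>b\<le>K. if b = a then z a * z b else 0)"
    unfolding qform_def by (intro sum.cong refl) auto
  then show ?thesis unfolding sq_norm_def by (simp add: power2_eq_square)
qed

lemma qform_add_unit:
  assumes "j \<le> K" "\<forall>a b. A a b = A b a"
  shows "qform K A (\<lambda>l. m l + (if l = j then t else 0)) =
         qform K A m + 2 * t * (\<Sum>b\<le>K. A j b * m b) + t\<^sup>2 * A j j"
proof -
  define \<delta> where "\<delta> = (\<lambda>l. if l = j then t else (0::real))"
  have \<delta>_sum: "(\<Sum>a\<le>K. \<delta> a * f a) = t * f j" for f
  proof -
    have "(\<Sum>a\<le>K. \<delta> a * f a) = (\<Sum>a\<le>K. if a = j then t * f a else 0)"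
      by (intro sum.cong) (auto simp: \<delta>_def)
    then show ?thesis using assms(1) by simp
  qed
  have "qform K A (\<lambda>l. m l + \<delta> l) = qform K A m + (\<Sum>a\<le>K. \<delta> a * (\<Sum>b\<le>K. A a b * m b))
        + (\<Sum>a\<le>K. m a * (\<Sum>b\<le>K. \<delta> b * A a b)) + (\<Sum>a\<le>K. \<delta> a * (\<Sum>b\<le>K. \<delta> b * A a b))"
    unfolding qform_def by (simp add: algebra_simps sum.distrib sum_distrib_left)
  also have "(\<Sum>a\<le>K. \<delta> a * (\<Sum>b\<le>K. A a b * m b)) = t * (\<Sum>b\<le>K. A j b * m b)"
    by (rule \<delta>_sum)
  also have "(\<Sum>a\<le>K. m a * (\<Sum>b\<le>K. \<delta> b * A a b)) = t * (\<Sum>b\<le>K. A j b * m b)"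
    using assms(2) by (simp add: \<delta>_sum sum_distrib_left mult_ac)
  also have "(\<Sum>a\<le>K. \<delta> a * (\<Sum>b\<le>K. \<delta> b * A a b)) = t\<^sup>2 * A j j"
    by (simp add: \<delta>_sum power2_eq_square)
  finally show ?thesis by (simp add: \<delta>_def)
qed

lemma linear_coeff_zero_if_nonneg:
  fixes a c :: real
  assumes "\<And>t. 0 \<le> 2 * t * c + t\<^sup>2 * a"
  shows "c = 0"
proof (rule ccontr)
  assume "c \<noteq> 0"
  define s where "s = 1 / (\<bar>a\<bar> + 1)"
  have s: "0 < s" "s * a < 2"
    unfolding s_def by (auto simp: field_simps abs_if split: if_splits)
  have "0 \<le> 2 * (- c * s) * c + (- c * s)\<^sup>2 * a" by (rule assms)
  also have "\<dots> = c\<^sup>2 * s * (s * a - 2)" by (simp add: power2_eq_square algebra_simps)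
  also have "\<dots> < 0" using s \<open>c \<noteq> 0\<close> by (simp add: mult_pos_neg)
  finally show False by simp
qed

lemma coord_le_sq_norm: "l \<le> K \<Longrightarrow> (z l)\<^sup>2 \<le> sq_norm K z"
  unfolding sq_norm_def by (intro member_le_sum) auto

lemma sq_norm_pos:
  assumes "\<exists>l\<le>K. z l \<noteq> 0"
  shows "0 < sq_norm K z"
proof -
  obtain l where "l \<le> K" "z l \<noteq> 0" using assms by blast
  then have "0 < (z l)\<^sup>2" by simp
  also have "\<dots> \<le> sq_norm K z" using \<open>l \<le> K\<close> by (rule coord_le_sq_norm)
  finally show ?thesis .
qed

lemma qform_abs_le: "\<bar>qform K D z\<bar> \<le> mat_l1 K D * sq_norm K z"
proof -
  have "\<bar>z a * D a b * z b\<bar> \<le> \<bar>D a b\<bar> * sq_norm K z" if "a \<le> K" "b \<le> K" for a b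
  proof -
    have "2 * (\<bar>z a\<bar> * \<bar>z b\<bar>) \<le> (z a)\<^sup>2 + (z b)\<^sup>2"
      using sum_squares_bound[of "\<bar>z a\<bar>" "\<bar>z b\<bar>"] by simp
    then have "\<bar>z a * z b\<bar> \<le> sq_norm K z"
      using coord_le_sq_norm[OF that(1), of z] coord_le_sq_norm[OF that(2), of z]
      by (simp add: abs_mult)
    then have "\<bar>D a b\<bar> * \<bar>z a * z b\<bar> \<le> \<bar>D a b\<bar> * sq_norm K z"
      by (simp add: mult_left_mono)
    then show ?thesis by (simp add: abs_mult mult_ac)
  qed
  then have "\<bar>qform K D z\<bar> \<le> (\<Sum>a\<le>K. \<Sum>b\<le>K. \<bar>D a b\<bar> * sq_norm K z)"
    unfolding qform_def by (intro order_trans[OF sum_abs] sum_mono order_trans[OF sum_abs]) auto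
  then show ?thesis unfolding mat_l1_def by (simp add: sum_distrib_right)
qed

section \<open>The real points of \<open>V\<^sub>i\<close> and the kernel of \<open>\<G>\<close>\<close>

definition psd_on_V :: "nat \<Rightarrow> nat \<Rightarrow> nat \<Rightarrow> (nat \<Rightarrow> nat \<Rightarrow> real) set" where
  "psd_on_V n d i = {A \<in> symmat (kdim n d). \<forall>z\<in>Vreal n d i. 0 \<le> qform (kdim n d) A z}"

lemma Ccone_eq: "Ccone n d i = {f \<in> forms n (2*d). \<exists>A\<in>psd_on_V n d i. Gmap n d A = f}"
  unfolding Ccone_def psd_on_V_def by blast

lemma Vreal_nonzero: "z \<in> Vreal n d i \<Longrightarrow> \<exists>l\<le>kdim n d. z l \<noteq> 0"
  by (auto simp: Vreal_def)

lemma Vreal_if_mon_prefix: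
  assumes "\<forall>l>kdim n d. z l = 0" "\<exists>l\<le>kdim n d. z l \<noteq> 0" "\<forall>l\<le>n+i. z l = mon n d l (x::nat \<Rightarrow> real)"
  shows "z \<in> Vreal n d i"
proof -
  have "(\<lambda>l. complex_of_real (z l)) \<in> Hcone n d i"
    unfolding Hcone_def using assms
    by (auto intro!: exI[of _ "\<lambda>j. complex_of_real (x j)"] simp: mon_def)
  then show ?thesis using assms unfolding Vreal_def by blast
qed

lemma hpeval_scale: "hpeval K e p (\<lambda>l. t * z l) = t ^ e * hpeval K e p z"
proof -
  have "(\<Prod>l\<le>K. (t * z l) ^ \<beta> l) = t ^ e * (\<Prod>l\<le>K. z l ^ \<beta> l)" if "\<beta> \<in> exps K e" for \<beta>
    using exps_sum[OF that] by (simp add: power_mult_distrib prod.distrib flip: power_sum)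
  then show ?thesis
    unfolding hpeval_def by (simp add: sum_distrib_left mult_ac cong: sum.cong)
qed

lemma Vreal_scale:
  assumes "z \<in> Vreal n d i" "t \<noteq> 0"
  shows "(\<lambda>l. t * z l) \<in> Vreal n d i"
proof -
  have "hpeval (kdim n d) e p (\<lambda>l. complex_of_real (t * z l)) =
        complex_of_real t ^ e * hpeval (kdim n d) e p (\<lambda>l. complex_of_real (z l))" for e p
    using hpeval_scale[of "kdim n d" e p "complex_of_real t" "\<lambda>l. complex_of_real (z l)"] by simp
  then show ?thesis using assms unfolding Vreal_def by auto
qed

lemma Vreal_limit:
  assumes "\<And>m. z m \<in> Vreal n d i" "\<forall>l\<le>kdim n d. (\<lambda>m. z m l) \<longlonglongrightarrow> w l"
    and "\<forall>l>kdim n d. w l = 0" "\<exists>l\<le>kdim n d. w l \<noteq> 0"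
  shows "w \<in> Vreal n d i"
proof -
  have "hpeval (kdim n d) e p (\<lambda>l. complex_of_real (w l)) = 0"
    if "\<forall>v\<in>Hcone n d i. hpeval (kdim n d) e p v = 0" for e p
  proof -
    have "(\<lambda>m. hpeval (kdim n d) e p (\<lambda>l. complex_of_real (z m l))) \<longlonglongrightarrow>
          hpeval (kdim n d) e p (\<lambda>l. complex_of_real (w l))"
      unfolding hpeval_def using assms(2) by (intro tendsto_intros) auto
    moreover have "hpeval (kdim n d) e p (\<lambda>l. complex_of_real (z m l)) = 0" for m
      using assms(1)[of m] that unfolding Vreal_def by blast
    ultimately show ?thesis by (simp add: LIMSEQ_const_iff)
  qed
  then show ?thesis using assms(3,4) unfolding Vreal_def by blast
qed

text \<open>The coefficients of \<open>q\<^sub>A\<close> as a homogeneous quadratic polynomial in \<open>Z\<^sub>0, \<dots>, Z\<^sub>K\<close>.\<close>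
definition qcoef :: "nat \<Rightarrow> (nat \<Rightarrow> nat \<Rightarrow> real) \<Rightarrow> (nat \<Rightarrow> nat) \<Rightarrow> complex" where
  "qcoef K A \<beta> = (\<Sum>(a,b)\<in>{(a,b). a \<le> K \<and> b \<le> K \<and>
      (\<lambda>l. (if l = a then 1 else 0) + (if l = b then 1 else 0)) = \<beta>}. complex_of_real (A a b))"

lemma hpeval_qcoef:
  "hpeval K 2 (qcoef K A) w = (\<Sum>a\<le>K. \<Sum>b\<le>K. w a * complex_of_real (A a b) * w b)"
proof -
  let ?S = "{..K} \<times> {..K}"
  let ?h = "\<lambda>(a,b). \<lambda>l::nat. (if l = a then 1 else 0) + (if l = b then (1::nat) else 0)"
  let ?g = "\<lambda>p. complex_of_real (A (fst p) (snd p)) * (\<Prod>l\<le>K. w l ^ ?h p l)"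
  have unit: "(\<Prod>l\<le>K. w l ^ (if l = a then 1 else 0)) = w a" if "a \<le> K" for a
  proof -
    have "(\<Prod>l\<le>K. w l ^ (if l = a then 1 else 0)) = (\<Prod>l\<le>K. if l = a then w l else 1)"
      by (intro prod.cong) auto
    then show ?thesis using that by simp
  qed
  have "(\<Prod>l\<le>K. w l ^ ?h (a,b) l) = w a * w b" if "a \<le> K" "b \<le> K" for a b
    using that by (simp add: power_add prod.distrib unit)
  then have "(\<Sum>a\<le>K. \<Sum>b\<le>K. w a * complex_of_real (A a b) * w b) = (\<Sum>a\<le>K. \<Sum>b\<le>K. ?g (a,b))"
    by (intro sum.cong refl) (simp add: mult_ac)
  also have "\<dots> = (\<Sum>p\<in>?S. ?g p)"
    by (simp add: sum.cartesian_product case_prod_unfold)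
  also have "\<dots> = (\<Sum>\<beta>\<in>exps K 2. \<Sum>p\<in>{p\<in>?S. ?h p = \<beta>}. ?g p)"
  proof (rule sum.group[symmetric])
    show "?h ` ?S \<subseteq> exps K 2"
      by (auto simp: exps_def sum.distrib)
  qed (auto simp: finite_exps)
  also have "\<dots> = hpeval K 2 (qcoef K A) w"
    unfolding hpeval_def qcoef_def
    by (auto simp: sum_distrib_right case_prod_unfold intro!: sum.cong sum.reindex_cong[of id])
  finally show ?thesis ..
qed

lemma qform_mon_eq_zero:
  assumes "\<And>\<gamma>. Gmap n d A \<gamma> = 0"
  shows "(\<Sum>a\<le>kdim n d. \<Sum>b\<le>kdim n d. mon n d a x * of_real (A a b) * mon n d b x) =
    (0::'a::{comm_ring_1,real_algebra_1})"
  unfolding qform_mon_Gmap assms by simp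

text \<open>Perturbing a point of \<open>H\<^sub>i\<close> in a coordinate \<open>j > n + i\<close> stays in \<open>V\<^sub>i\<close>, so \<open>q\<^sub>A\<close>
  has a double zero there in direction \<open>j\<close>: row \<open>j\<close> of \<open>A\<close> annihilates all monomial vectors.\<close>
lemma psd_on_V_kernel_row_zero:
  assumes A: "A \<in> psd_on_V n d i" and G: "\<And>\<gamma>. Gmap n d A \<gamma> = 0"
    and j: "n + i < j" "j \<le> kdim n d" and b: "b \<le> kdim n d"
  shows "A j b = 0"
proof -
  let ?K = "kdim n d"
  have "(\<Sum>b\<le>?K. A j b * mon n d b x) = 0" for x :: "nat \<Rightarrow> real"
  proof (rule linear_coeff_zero_if_nonneg)
    fix t
    let ?m = "\<lambda>l. mon n d l x :: real"
    define z where "z = (\<lambda>l. if l \<le> ?K then ?m l + (if l = j then t else 0) else 0)"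
    have "0 \<le> qform ?K A z"
    proof (cases "\<exists>l\<le>?K. z l \<noteq> 0")
      case True
      then have "z \<in> Vreal n d i"
        using j by (intro Vreal_if_mon_prefix[where x = x]) (auto simp: z_def)
      then show ?thesis using A by (auto simp: psd_on_V_def)
    next
      case False
      then have "qform ?K A z = qform ?K A (\<lambda>_. 0)" by (intro qform_cong) auto
      then show ?thesis by (simp add: qform_def)
    qed
    also have "qform ?K A z = qform ?K A (\<lambda>l. ?m l + (if l = j then t else 0))"
      by (intro qform_cong) (simp add: z_def)
    also have "\<dots> = 2 * t * (\<Sum>b\<le>?K. A j b * ?m b) + t\<^sup>2 * A j j"
      using qform_add_unit[OF j(2), of A] qform_mon_eq_zero[OF G, of x] A
      by (simp add: psd_on_V_def symmat_def qform_def)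
    finally show "0 \<le> 2 * t * (\<Sum>b\<le>?K. A j b * ?m b) + t\<^sup>2 * A j j" .
  qed
  then show ?thesis using b by (rule mon_linear_independent)
qed

text \<open>By the previous lemma \<open>q\<^sub>A\<close> only involves \<open>Z\<^sub>0, \<dots>, Z\<^sub>n\<^sub>+\<^sub>i\<close>, so it vanishes on \<open>H\<^sub>i\<close>,
  hence on its Zariski closure.\<close>
lemma psd_on_V_kernel_qform_zero:
  assumes A: "A \<in> psd_on_V n d i" and G: "\<And>\<gamma>. Gmap n d A \<gamma> = 0" and z: "z \<in> Vreal n d i"
  shows "qform (kdim n d) A z = 0"
proof -
  let ?K = "kdim n d"
  have zero: "A a b = 0" if "n + i < a \<or> n + i < b" for a b
  proof (cases "a \<le> ?K \<and> b \<le> ?K")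
    case True
    have "A a b = A b a" using A by (simp add: psd_on_V_def symmat_def)
    then show ?thesis using that True psd_on_V_kernel_row_zero[OF A G] by auto
  next
    case False
    then show ?thesis using A by (auto simp: psd_on_V_def symmat_def)
  qed
  have "hpeval ?K 2 (qcoef ?K A) w = 0" if w: "w \<in> Hcone n d i" for w
  proof -
    obtain x :: "nat \<Rightarrow> complex" where x: "\<forall>l\<le>n+i. w l = mon n d l x"
      using w by (auto simp: Hcone_def)
    have "hpeval ?K 2 (qcoef ?K A) w = (\<Sum>a\<le>?K. \<Sum>b\<le>?K. w a * complex_of_real (A a b) * w b)"
      by (rule hpeval_qcoef)
    also have "\<dots> = (\<Sum>a\<le>?K. \<Sum>b\<le>?K. mon n d a x * complex_of_real (A a b) * mon n d b x)"
      using x zero by (intro sum.cong refl) (metis mult_eq_0_iff not_le of_real_0)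
    also have "\<dots> = 0" by (rule qform_mon_eq_zero[OF G])
    finally show ?thesis .
  qed
  then have "hpeval ?K 2 (qcoef ?K A) (\<lambda>l. complex_of_real (z l)) = 0"
    using z unfolding Vreal_def by blast
  moreover have "hpeval ?K 2 (qcoef ?K A) (\<lambda>l. complex_of_real (z l)) = complex_of_real (qform ?K A z)"
    by (simp add: hpeval_qcoef qform_def)
  ultimately show ?thesis by simp
qed

section \<open>Closedness of \<open>C\<^sub>i\<close>\<close>

lemma bounded_coords_convergent_subseq:
  fixes x :: "nat \<Rightarrow> 'i \<Rightarrow> real"
  assumes "finite I" "\<And>m j. j \<in> I \<Longrightarrow> \<bar>x m j\<bar> \<le> R"
  obtains r y where "strict_mono r" "\<And>j. j \<in> I \<Longrightarrow> (\<lambda>m. x (r m) j) \<longlonglongrightarrow> y j"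
proof -
  have "\<forall>\<delta>\<subseteq>I. \<exists>y r. strict_mono r \<and>
    (\<forall>e>0. eventually (\<lambda>m. \<forall>j\<in>\<delta>. dist (x (r m) j) (y j) < e) sequentially)"
    using assms by (intro compact_lemma_general[where unproj = id]) (auto simp: bounded_real)
  then obtain y r where "strict_mono r"
    "\<forall>e>0. eventually (\<lambda>m. \<forall>j\<in>I. dist (x (r m) j) (y j) < e) sequentially"
    by blast
  then show ?thesis
    by (intro that[of r y]) (auto simp: tendsto_iff elim!: eventually_mono)
qed

lemma bounded_matrices_convergent_subseq:
  fixes C :: "nat \<Rightarrow> nat \<Rightarrow> nat \<Rightarrow> real"
  assumes "\<And>m a b. a \<le> K \<Longrightarrow> b \<le> K \<Longrightarrow> \<bar>C m a b\<bar> \<le> R"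
  obtains r B where "strict_mono r" "\<forall>a\<le>K. \<forall>b\<le>K. (\<lambda>m. C (r m) a b) \<longlonglongrightarrow> B a b"
    "\<forall>a b. K < a \<or> K < b \<longrightarrow> B a b = 0"
proof -
  obtain r y where "strict_mono r" "\<And>p. p \<in> {..K} \<times> {..K} \<Longrightarrow> (\<lambda>m. C (r m) (fst p) (snd p)) \<longlonglongrightarrow> y p"
    by (rule bounded_coords_convergent_subseq[of "{..K} \<times> {..K}" "\<lambda>m p. C m (fst p) (snd p)"])
      (auto intro: assms)
  then show ?thesis
    by (intro that[of r "\<lambda>a b. if a \<le> K \<and> b \<le> K then y (a, b) else 0"]) auto
qed

lemma qform_tendsto_mat:
  assumes "\<forall>a\<le>K. \<forall>b\<le>K. (\<lambda>m. A m a b) \<longlonglongrightarrow> B a b"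
  shows "(\<lambda>m. qform K (A m) z) \<longlonglongrightarrow> qform K B z"
  unfolding qform_def using assms by (intro tendsto_intros) auto

lemma qform_tendsto_vec:
  assumes "\<forall>l\<le>K. (\<lambda>m. z m l) \<longlonglongrightarrow> w l"
  shows "(\<lambda>m. qform K A (z m)) \<longlonglongrightarrow> qform K A w"
  unfolding qform_def using assms by (intro tendsto_intros) auto

lemma sq_norm_tendsto:
  assumes "\<forall>l\<le>K. (\<lambda>m. z m l) \<longlonglongrightarrow> w l"
  shows "(\<lambda>m. sq_norm K (z m)) \<longlonglongrightarrow> sq_norm K w"
  unfolding sq_norm_def using assms by (intro tendsto_intros) auto

lemma mat_l1_tendsto:
  assumes "\<forall>a\<le>K. \<forall>b\<le>K. (\<lambda>m. A m a b) \<longlonglongrightarrow> B a b"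
  shows "(\<lambda>m. mat_l1 K (A m)) \<longlonglongrightarrow> mat_l1 K B"
  unfolding mat_l1_def using assms by (intro tendsto_intros) auto

lemma psd_on_V_limit:
  assumes "\<And>m. C m \<in> psd_on_V n d i" "\<forall>a\<le>kdim n d. \<forall>b\<le>kdim n d. (\<lambda>m. C m a b) \<longlonglongrightarrow> B a b"
    "\<forall>a b. kdim n d < a \<or> kdim n d < b \<longrightarrow> B a b = 0"
  shows "B \<in> psd_on_V n d i"
proof -
  have "B a b = B b a" for a b
  proof (cases "a \<le> kdim n d \<and> b \<le> kdim n d")
    case True
    have "C m a b = C m b a" for m using assms(1)[of m] by (simp add: psd_on_V_def symmat_def)
    then have "(\<lambda>m. C m a b) \<longlonglongrightarrow> B b a" using assms(2) True by simp
    then show ?thesis using assms(2) True LIMSEQ_unique by blast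
  next
    case False
    then have "B a b = 0" "B b a = 0" using assms(3) by auto
    then show ?thesis by simp
  qed
  then have "B \<in> symmat (kdim n d)"
    using assms(3) unfolding symmat_def by blast
  moreover have "0 \<le> qform (kdim n d) B z" if "z \<in> Vreal n d i" for z
    using assms that
    by (intro LIMSEQ_le_const[OF qform_tendsto_mat[OF assms(2)]]) (auto simp: psd_on_V_def)
  ultimately show ?thesis by (simp add: psd_on_V_def)
qed

lemma psd_on_V_convergent_subseq:
  fixes C :: "nat \<Rightarrow> nat \<Rightarrow> nat \<Rightarrow> real"
  assumes "\<And>m. C m \<in> psd_on_V n d i" "\<And>m a b. a \<le> kdim n d \<Longrightarrow> b \<le> kdim n d \<Longrightarrow> \<bar>C m a b\<bar> \<le> R"
  obtains r B where "strict_mono r" "B \<in> psd_on_V n d i"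
    "\<forall>a\<le>kdim n d. \<forall>b\<le>kdim n d. (\<lambda>m. C (r m) a b) \<longlonglongrightarrow> B a b"
proof -
  obtain r B where r: "strict_mono r" "\<forall>a\<le>kdim n d. \<forall>b\<le>kdim n d. (\<lambda>m. C (r m) a b) \<longlonglongrightarrow> B a b"
    "\<forall>a b. kdim n d < a \<or> kdim n d < b \<longrightarrow> B a b = 0"
    by (rule bounded_matrices_convergent_subseq[of "kdim n d" C R, OF assms(2)])
  moreover have "B \<in> psd_on_V n d i"
    by (rule psd_on_V_limit[of "\<lambda>m. C (r m)"]) (fact assms(1) r(2,3))+
  ultimately show ?thesis using that by blast
qed

lemma Vreal_unit_convergent_subseq:
  fixes w :: "nat \<Rightarrow> nat \<Rightarrow> real"
  assumes w: "\<And>m. w m \<in> Vreal n d i" "\<And>m. sq_norm (kdim n d) (w m) = 1"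
  obtains r v where "strict_mono r" "v \<in> Vreal n d i" "\<forall>l\<le>kdim n d. (\<lambda>m. w (r m) l) \<longlonglongrightarrow> v l"
proof -
  let ?K = "kdim n d"
  have bound: "\<bar>w m l\<bar> \<le> 1" if "l \<in> {..?K}" for m l
    using coord_le_sq_norm[of l ?K "w m"] w(2)[of m] that by (simp add: abs_square_le_1)
  obtain r y where r: "strict_mono r" "\<And>l. l \<in> {..?K} \<Longrightarrow> (\<lambda>m. w (r m) l) \<longlonglongrightarrow> y l"
    by (rule bounded_coords_convergent_subseq[of "{..?K}" w 1]) (auto intro: bound)
  define v where "v = (\<lambda>l. if l \<le> ?K then y l else 0)"
  have lim: "\<forall>l\<le>?K. (\<lambda>m. w (r m) l) \<longlonglongrightarrow> v l" using r(2) by (simp add: v_def)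
  have "sq_norm ?K v = 1"
    using LIMSEQ_unique[OF sq_norm_tendsto[OF lim]] w(2) by simp
  then have "\<exists>l\<le>?K. v l \<noteq> 0"
    by (rule contrapos_pp) (simp add: sq_norm_def)
  then have "v \<in> Vreal n d i"
  proof (rule Vreal_limit[of "\<lambda>m. w (r m)", rotated -1])
    show "\<forall>l>?K. v l = 0" by (simp add: v_def)
  qed (fact w(1) lim)+
  with r(1) lim show ?thesis using that by blast
qed

text \<open>By compactness: \<open>q\<^sub>A\<close> attains its minimum on the unit sphere of the closed cone \<open>V\<^sub>i(\<real>)\<close>.\<close>
lemma qform_coercive:
  assumes pos: "\<forall>z\<in>Vreal n d i. 0 < qform (kdim n d) A z"
  obtains c where "c > 0" "\<forall>z\<in>Vreal n d i. c * sq_norm (kdim n d) z \<le> qform (kdim n d) A z"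
proof (rule ccontr)
  let ?K = "kdim n d"
  assume "\<not> thesis"
  then have "\<forall>m::nat. \<exists>z\<in>Vreal n d i. qform ?K A z < inverse (real (Suc m)) * sq_norm ?K z"
    using that by (metis not_le inverse_positive_iff_positive of_nat_0_less_iff zero_less_Suc)
  then obtain z where z: "\<And>m. z m \<in> Vreal n d i"
    "\<And>m. qform ?K A (z m) < inverse (real (Suc m)) * sq_norm ?K (z m)"
    by metis
  define s where "s = (\<lambda>m. 1 / sqrt (sq_norm ?K (z m)))"
  define w where "w = (\<lambda>m l. s m * z m l)"
  have pos_norm: "0 < sq_norm ?K (z m)" for m
    using Vreal_nonzero[OF z(1)] by (rule sq_norm_pos)
  have s2: "(s m)\<^sup>2 * sq_norm ?K (z m) = 1" for m
    using pos_norm[of m] by (simp add: s_def power_divide)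
  have wV: "w m \<in> Vreal n d i" for m
    unfolding w_def using z(1) by (rule Vreal_scale) (use pos_norm[of m] in \<open>simp add: s_def\<close>)
  have w_norm: "sq_norm ?K (w m) = 1" for m
    using s2 by (simp add: w_def sq_norm_def power_mult_distrib sum_distrib_left)
  have w_small: "qform ?K A (w m) < inverse (real (Suc m))" for m
  proof -
    have "qform ?K A (w m) = (s m)\<^sup>2 * qform ?K A (z m)" unfolding w_def by (rule qform_scale)
    also have "\<dots> < (s m)\<^sup>2 * (inverse (real (Suc m)) * sq_norm ?K (z m))"
      using z(2)[of m] pos_norm[of m] by (intro mult_strict_left_mono) (auto simp: s_def)
    also have "\<dots> = inverse (real (Suc m))" using s2[of m] by (simp add: mult_ac)
    finally show ?thesis .
  qed
  obtain r v where r: "strict_mono r" "v \<in> Vreal n d i" "\<forall>l\<le>?K. (\<lambda>m. w (r m) l) \<longlonglongrightarrow> v l"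
    by (rule Vreal_unit_convergent_subseq[OF wV w_norm])
  have "qform ?K A v \<le> 0"
  proof (rule LIMSEQ_le)
    show "(\<lambda>m. qform ?K A (w (r m))) \<longlonglongrightarrow> qform ?K A v" using r(3) by (rule qform_tendsto_vec)
    show "(\<lambda>m. inverse (real (Suc (r m)))) \<longlonglongrightarrow> 0"
      using LIMSEQ_subseq_LIMSEQ[OF LIMSEQ_inverse_real_of_nat r(1)] by (simp add: o_def)
    show "\<exists>N. \<forall>m\<ge>N. qform ?K A (w (r m)) \<le> inverse (real (Suc (r m)))"
      using w_small less_imp_le by blast
  qed
  then show False using pos r(2) by force
qed

lemma entry_le_mat_l1: "a \<le> K \<Longrightarrow> b \<le> K \<Longrightarrow> \<bar>A a b\<bar> \<le> mat_l1 K A"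
  unfolding mat_l1_def
  by (rule order_trans[OF member_le_sum member_le_sum[of a]]) (auto intro: sum_nonneg)

lemma mat_l1_nonneg: "0 \<le> mat_l1 K A"
  unfolding mat_l1_def by (intro sum_nonneg) auto

lemma mat_l1_scale: "mat_l1 K (\<lambda>a b. c * B a b) = \<bar>c\<bar> * mat_l1 K B"
  unfolding mat_l1_def by (simp add: abs_mult sum_distrib_left)

lemma coeff_le_form_l1: "\<gamma> \<in> exps n l \<Longrightarrow> \<bar>g \<gamma>\<bar> \<le> form_l1 n l g"
  unfolding form_l1_def by (intro member_le_sum) (auto simp: finite_exps)

lemma form_l1_nonneg: "0 \<le> form_l1 n l g"
  unfolding form_l1_def by (intro sum_nonneg) auto

lemma form_l1_scale: "form_l1 n l (\<lambda>\<gamma>. c * g \<gamma>) = \<bar>c\<bar> * form_l1 n l g"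
  unfolding form_l1_def by (simp add: abs_mult sum_distrib_left)

lemma form_l1_eq_0: "g \<in> forms n l \<Longrightarrow> form_l1 n l g = 0 \<Longrightarrow> g = (\<lambda>_. 0)"
  using coeff_le_form_l1[of _ n l g] by (fastforce simp: forms_def)

lemma psd_on_V_add: "A \<in> psd_on_V n d i \<Longrightarrow> B \<in> psd_on_V n d i \<Longrightarrow> 0 \<le> c \<Longrightarrow>
    (\<lambda>a b. A a b + c * B a b) \<in> psd_on_V n d i"
  unfolding psd_on_V_def symmat_def by (auto simp: qform_add)

lemma psd_on_V_zero: "(\<lambda>a b. 0) \<in> psd_on_V n d i"
  unfolding psd_on_V_def symmat_def qform_def by simp

lemma psd_on_V_scale: "B \<in> psd_on_V n d i \<Longrightarrow> 0 \<le> c \<Longrightarrow> (\<lambda>a b. c * B a b) \<in> psd_on_V n d i"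
  using psd_on_V_add[OF psd_on_V_zero, of B n d i c] by simp

definition min_rep_norm :: "nat \<Rightarrow> nat \<Rightarrow> nat \<Rightarrow> ((nat \<Rightarrow> nat) \<Rightarrow> real) \<Rightarrow> real" where
  "min_rep_norm n d i g = Inf {mat_l1 (kdim n d) B | B. B \<in> psd_on_V n d i \<and> Gmap n d B = g}"

lemma min_rep_norm_le:
  "B \<in> psd_on_V n d i \<Longrightarrow> Gmap n d B = g \<Longrightarrow> min_rep_norm n d i g \<le> mat_l1 (kdim n d) B"
  unfolding min_rep_norm_def
  by (rule cInf_lower) (auto intro: bdd_belowI[where m = 0] simp: mat_l1_nonneg)

lemma min_rep_norm_lessE:
  assumes "A \<in> psd_on_V n d i" "min_rep_norm n d i (Gmap n d A) < x"
  obtains B where "B \<in> psd_on_V n d i" "Gmap n d B = Gmap n d A" "mat_l1 (kdim n d) B < x"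
  using assms cInf_lessD[of "{mat_l1 (kdim n d) B | B. B \<in> psd_on_V n d i \<and> Gmap n d B = Gmap n d A}" x]
  unfolding min_rep_norm_def by blast

text \<open>\<open>C\<close> is a representative of nearly minimal norm, rescaled to make that minimum 1.\<close>
lemma psd_on_V_normalized_rep:
  assumes A: "A \<in> psd_on_V n d i" and "0 < \<kappa>"
    and large: "\<And>B. B \<in> psd_on_V n d i \<Longrightarrow> Gmap n d B = Gmap n d A \<Longrightarrow>
      \<kappa> * form_l1 n (2*d) (Gmap n d A) < mat_l1 (kdim n d) B"
  obtains C where "C \<in> psd_on_V n d i" "mat_l1 (kdim n d) C \<le> 2" "\<kappa> * form_l1 n (2*d) (Gmap n d C) \<le> 1"
    "\<And>B. B \<in> psd_on_V n d i \<Longrightarrow> Gmap n d B = Gmap n d C \<Longrightarrow> 1 \<le> mat_l1 (kdim n d) B"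
proof -
  let ?K = "kdim n d" and ?P = "psd_on_V n d i" and ?f = "form_l1 n (2*d) (Gmap n d A)"
  define \<nu> where "\<nu> = min_rep_norm n d i (Gmap n d A)"
  have "0 < ?f"
  proof (rule ccontr)
    assume "\<not> 0 < ?f"
    then have G0: "Gmap n d A = (\<lambda>_. 0)"
      using form_l1_nonneg[of n "2*d"] by (intro form_l1_eq_0[OF Gmap_forms]) (simp add: order.antisym)
    have "\<kappa> * ?f < mat_l1 ?K (\<lambda>a b. 0)"
      using large[OF psd_on_V_zero] G0 by (simp add: Gmap_def)
    then show False using G0 by (simp add: mat_l1_def form_l1_def)
  qed
  have \<nu>_ge: "\<kappa> * ?f \<le> \<nu>"
    unfolding \<nu>_def min_rep_norm_def using A large by (intro cInf_greatest) (auto simp: less_imp_le)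
  with \<open>0 < \<kappa>\<close> \<open>0 < ?f\<close> have "0 < \<nu>"
    by (meson mult_pos_pos order_less_le_trans)
  then obtain B where B: "B \<in> ?P" "Gmap n d B = Gmap n d A" "mat_l1 ?K B < 2 * \<nu>"
    using min_rep_norm_lessE[OF A, of "2 * \<nu>"] unfolding \<nu>_def by auto
  define C where "C = (\<lambda>a b. (1 / \<nu>) * B a b)"
  have GC: "Gmap n d C = (\<lambda>\<gamma>. (1 / \<nu>) * Gmap n d A \<gamma>)"
    unfolding C_def Gmap_scale B(2) ..
  show ?thesis
  proof (rule that)
    show "C \<in> ?P" unfolding C_def using B(1) \<open>0 < \<nu>\<close> by (intro psd_on_V_scale) auto
    have "mat_l1 ?K C = mat_l1 ?K B / \<nu>"
      using \<open>0 < \<nu>\<close> unfolding C_def mat_l1_scale by simp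
    then show "mat_l1 ?K C \<le> 2"
      using B(3) \<open>0 < \<nu>\<close> by (simp add: pos_divide_le_eq)
    have "form_l1 n (2*d) (Gmap n d C) = ?f / \<nu>"
      using \<open>0 < \<nu>\<close> unfolding GC form_l1_scale by simp
    then show "\<kappa> * form_l1 n (2*d) (Gmap n d C) \<le> 1"
      using \<nu>_ge \<open>0 < \<nu>\<close> by (simp add: pos_divide_le_eq)
  next
    fix B' assume B': "B' \<in> ?P" "Gmap n d B' = Gmap n d C"
    have "(\<lambda>a b. \<nu> * B' a b) \<in> ?P" using B'(1) \<open>0 < \<nu>\<close> by (intro psd_on_V_scale) auto
    moreover have "Gmap n d (\<lambda>a b. \<nu> * B' a b) = Gmap n d A"
      using \<open>0 < \<nu>\<close> unfolding Gmap_scale B'(2) GC by simp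
    ultimately have "\<nu> \<le> mat_l1 ?K (\<lambda>a b. \<nu> * B' a b)"
      unfolding \<nu>_def by (rule min_rep_norm_le)
    also have "\<dots> = \<nu> * mat_l1 ?K B'"
      using \<open>0 < \<nu>\<close> by (simp add: mat_l1_scale)
    finally show "1 \<le> mat_l1 ?K B'" using \<open>0 < \<nu>\<close> by simp
  qed
qed

lemma psd_on_V_sub_kernel:
  assumes C: "C \<in> psd_on_V n d i" and B: "B \<in> psd_on_V n d i" and G: "\<And>\<gamma>. Gmap n d B \<gamma> = 0"
  shows "(\<lambda>a b. C a b + (-1) * B a b) \<in> psd_on_V n d i"
    and "Gmap n d (\<lambda>a b. C a b + (-1) * B a b) = Gmap n d C"
proof -
  have "qform (kdim n d) (\<lambda>a b. C a b + (-1) * B a b) z = qform (kdim n d) C z" if "z \<in> Vreal n d i" for z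
    unfolding qform_add using psd_on_V_kernel_qform_zero[OF B G that] by simp
  then show "(\<lambda>a b. C a b + (-1) * B a b) \<in> psd_on_V n d i"
    using C B by (auto simp: psd_on_V_def symmat_def)
  show "Gmap n d (\<lambda>a b. C a b + (-1) * B a b) = Gmap n d C"
    unfolding Gmap_add G by simp
qed

lemma coeff_tendsto_zero:
  assumes "\<And>m. g m \<in> forms n l" "\<And>m. real (Suc m) * form_l1 n l (g m) \<le> 1"
  shows "(\<lambda>m. g m \<gamma>) \<longlonglongrightarrow> 0"
proof (cases "\<gamma> \<in> exps n l")
  case True
  have "real (Suc m) * \<bar>g m \<gamma>\<bar> \<le> 1" for m
    using mult_left_mono[OF coeff_le_form_l1[OF True, of "g m"], of "real (Suc m)"] assms(2)[of m]
    by linarith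
  then have "\<forall>m. norm (g m \<gamma>) \<le> inverse (real (Suc m))"
    by (simp add: inverse_eq_divide pos_le_divide_eq mult.commute)
  then show ?thesis by (rule Lim_null_comparison[OF always_eventually LIMSEQ_inverse_real_of_nat])
next
  case False
  then show ?thesis using assms(1) by (simp add: forms_def)
qed

text \<open>A limit \<open>B\<close> of a subsequence lies in the kernel of \<^const>\<open>Gmap\<close>; subtracting it keeps the
  representatives in \<^const>\<open>psd_on_V\<close> and makes them tend to 0.\<close>
lemma psd_on_V_small_rep:
  assumes C: "\<And>m. C m \<in> psd_on_V n d i" "\<And>m a b. a \<le> kdim n d \<Longrightarrow> b \<le> kdim n d \<Longrightarrow> \<bar>C m a b\<bar> \<le> R"
    and G: "\<And>\<gamma>. (\<lambda>m. Gmap n d (C m) \<gamma>) \<longlonglongrightarrow> 0"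
  obtains m B where "B \<in> psd_on_V n d i" "Gmap n d B = Gmap n d (C m)" "mat_l1 (kdim n d) B < 1"
proof -
  let ?K = "kdim n d"
  obtain r B where r: "strict_mono r" "B \<in> psd_on_V n d i"
    "\<forall>a\<le>?K. \<forall>b\<le>?K. (\<lambda>m. C (r m) a b) \<longlonglongrightarrow> B a b"
    using C by (rule psd_on_V_convergent_subseq)
  have G0: "Gmap n d B \<gamma> = 0" for \<gamma>
  proof (rule LIMSEQ_unique[OF Gmap_tendsto[OF r(3)]])
    show "(\<lambda>m. Gmap n d (C (r m)) \<gamma>) \<longlonglongrightarrow> 0"
      using LIMSEQ_subseq_LIMSEQ[OF G r(1)] by (simp add: o_def)
  qed
  define D where "D = (\<lambda>m a b. C (r m) a b + (-1) * B a b)"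
  have "(\<lambda>m. mat_l1 ?K (D m)) \<longlonglongrightarrow> mat_l1 ?K (\<lambda>a b. B a b + (-1) * B a b)"
    unfolding D_def
  proof (rule mat_l1_tendsto, intro allI impI)
    fix a b assume "a \<le> ?K" "b \<le> ?K"
    then show "(\<lambda>m. C (r m) a b + (-1) * B a b) \<longlonglongrightarrow> B a b + (-1) * B a b"
      using r(3) by (intro tendsto_add tendsto_const) auto
  qed
  then have "eventually (\<lambda>m. mat_l1 ?K (D m) < 1) sequentially"
    by (rule order_tendstoD) (simp add: mat_l1_def)
  then obtain N where "\<forall>m\<ge>N. mat_l1 ?K (D m) < 1"
    unfolding eventually_sequentially ..
  show ?thesis
  proof (rule that)
    show "D N \<in> psd_on_V n d i"
      unfolding D_def by (rule psd_on_V_sub_kernel(1)[OF C(1) r(2) G0])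
    show "Gmap n d (D N) = Gmap n d (C (r N))"
      unfolding D_def by (rule psd_on_V_sub_kernel(2)[OF C(1) r(2) G0])
    show "mat_l1 ?K (D N) < 1" using \<open>\<forall>m\<ge>N. mat_l1 ?K (D m) < 1\<close> by blast
  qed
qed

text \<open>A Hoffman-type bound.  Were it false, normalized representatives would give bounded
  \<open>C\<^sub>m\<close> with \<open>\<G>(C\<^sub>m) \<rightarrow> 0\<close>, none of whose forms has a representative of norm below 1.\<close>
lemma psd_on_V_bounded_rep:
  "\<exists>\<kappa>. \<forall>A\<in>psd_on_V n d i. \<exists>B\<in>psd_on_V n d i. Gmap n d B = Gmap n d A \<and>
    mat_l1 (kdim n d) B \<le> \<kappa> * form_l1 n (2*d) (Gmap n d A)"
proof (rule ccontr)
  let ?K = "kdim n d" and ?P = "psd_on_V n d i"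
  assume "\<not> ?thesis"
  then have no_bound: "\<forall>\<kappa>. \<exists>A\<in>?P. \<forall>B\<in>?P. Gmap n d B = Gmap n d A \<longrightarrow>
      \<kappa> * form_l1 n (2*d) (Gmap n d A) < mat_l1 ?K B"
    by (auto simp: not_le)
  have "\<forall>m. \<exists>C. C \<in> ?P \<and> mat_l1 ?K C \<le> 2 \<and> real (Suc m) * form_l1 n (2*d) (Gmap n d C) \<le> 1 \<and>
     (\<forall>B\<in>?P. Gmap n d B = Gmap n d C \<longrightarrow> 1 \<le> mat_l1 ?K B)"
  proof
    fix m
    obtain A where A: "A \<in> ?P" and large: "\<And>B. B \<in> ?P \<Longrightarrow> Gmap n d B = Gmap n d A \<Longrightarrow>
        real (Suc m) * form_l1 n (2*d) (Gmap n d A) < mat_l1 ?K B"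
      using spec[OF no_bound, of "real (Suc m)"] by blast
    obtain C where "C \<in> ?P" "mat_l1 ?K C \<le> 2" "real (Suc m) * form_l1 n (2*d) (Gmap n d C) \<le> 1"
      "\<And>B. B \<in> ?P \<Longrightarrow> Gmap n d B = Gmap n d C \<Longrightarrow> 1 \<le> mat_l1 ?K B"
      by (rule psd_on_V_normalized_rep[OF A _ large]) auto
    then show "\<exists>C. C \<in> ?P \<and> mat_l1 ?K C \<le> 2 \<and> real (Suc m) * form_l1 n (2*d) (Gmap n d C) \<le> 1 \<and>
     (\<forall>B\<in>?P. Gmap n d B = Gmap n d C \<longrightarrow> 1 \<le> mat_l1 ?K B)" by blast
  qed
  then obtain C where "\<forall>m. C m \<in> ?P \<and> mat_l1 ?K (C m) \<le> 2 \<and>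
      real (Suc m) * form_l1 n (2*d) (Gmap n d (C m)) \<le> 1 \<and>
      (\<forall>B\<in>?P. Gmap n d B = Gmap n d (C m) \<longrightarrow> 1 \<le> mat_l1 ?K B)"
    by (rule choice[THEN exE])
  then have C: "\<And>m. C m \<in> ?P" "\<And>m. mat_l1 ?K (C m) \<le> 2"
    "\<And>m. real (Suc m) * form_l1 n (2*d) (Gmap n d (C m)) \<le> 1"
    "\<And>m B. B \<in> ?P \<Longrightarrow> Gmap n d B = Gmap n d (C m) \<Longrightarrow> 1 \<le> mat_l1 ?K B"
    by blast+
  have "\<bar>C m a b\<bar> \<le> 2" if "a \<le> ?K" "b \<le> ?K" for m a b
    using entry_le_mat_l1[OF that, of "C m"] C(2)[of m] by linarith
  moreover have "(\<lambda>m. Gmap n d (C m) \<gamma>) \<longlonglongrightarrow> 0" for \<gamma>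
    using Gmap_forms C(3) by (rule coeff_tendsto_zero)
  ultimately obtain m B where "B \<in> ?P" "Gmap n d B = Gmap n d (C m)" "mat_l1 ?K B < 1"
    using C(1) psd_on_V_small_rep by metis
  then show False using C(4) by fastforce
qed

lemma Ccone_bounded_reps:
  fixes g :: "nat \<Rightarrow> (nat \<Rightarrow> nat) \<Rightarrow> real"
  assumes g: "\<And>m. g m \<in> Ccone n d i" and M: "\<And>m. form_l1 n (2*d) (g m) \<le> M"
  obtains B R where "\<And>m. B m \<in> psd_on_V n d i" "\<And>m. Gmap n d (B m) = g m"
    "\<And>m a b. a \<le> kdim n d \<Longrightarrow> b \<le> kdim n d \<Longrightarrow> \<bar>B m a b\<bar> \<le> R"
proof -
  let ?K = "kdim n d" and ?P = "psd_on_V n d i"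
  obtain \<kappa> where \<kappa>: "\<And>A. A \<in> ?P \<Longrightarrow> \<exists>B\<in>?P. Gmap n d B = Gmap n d A \<and>
    mat_l1 ?K B \<le> \<kappa> * form_l1 n (2*d) (Gmap n d A)"
    using psd_on_V_bounded_rep by blast
  have "\<forall>m. \<exists>B. B \<in> ?P \<and> Gmap n d B = g m \<and> mat_l1 ?K B \<le> \<kappa> * form_l1 n (2*d) (g m)"
  proof
    fix m
    obtain A where A: "A \<in> ?P" "Gmap n d A = g m" using g[of m] unfolding Ccone_eq by blast
    then obtain B where "B \<in> ?P" "Gmap n d B = Gmap n d A"
      "mat_l1 ?K B \<le> \<kappa> * form_l1 n (2*d) (Gmap n d A)"
      using \<kappa> by blast
    then show "\<exists>B. B \<in> ?P \<and> Gmap n d B = g m \<and> mat_l1 ?K B \<le> \<kappa> * form_l1 n (2*d) (g m)"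
      using A(2) by auto
  qed
  then obtain B where "\<forall>m. B m \<in> ?P \<and> Gmap n d (B m) = g m \<and> mat_l1 ?K (B m) \<le> \<kappa> * form_l1 n (2*d) (g m)"
    by (rule choice[THEN exE])
  then have B: "\<And>m. B m \<in> ?P" "\<And>m. Gmap n d (B m) = g m"
    "\<And>m. mat_l1 ?K (B m) \<le> \<kappa> * form_l1 n (2*d) (g m)"
    by blast+
  have "\<bar>B m a b\<bar> \<le> \<bar>\<kappa>\<bar> * M" if "a \<le> ?K" "b \<le> ?K" for m a b
  proof -
    have "\<bar>B m a b\<bar> \<le> \<kappa> * form_l1 n (2*d) (g m)"
      using entry_le_mat_l1[OF that, of "B m"] B(3)[of m] by linarith
    also have "\<dots> \<le> \<bar>\<kappa>\<bar> * form_l1 n (2*d) (g m)"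
      using form_l1_nonneg by (intro mult_right_mono) auto
    also have "\<dots> \<le> \<bar>\<kappa>\<bar> * M"
      using M[of m] by (intro mult_left_mono) auto
    finally show ?thesis .
  qed
  with B(1,2) show ?thesis by (rule that)
qed

lemma Ccone_closed_sequentially:
  assumes g: "\<And>m. g m \<in> Ccone n d i" and f: "f \<in> forms n (2*d)"
    and lim: "\<forall>\<gamma>\<in>exps n (2*d). (\<lambda>m. g m \<gamma>) \<longlonglongrightarrow> f \<gamma>"
  shows "f \<in> Ccone n d i"
proof -
  have "(\<lambda>m. form_l1 n (2*d) (g m)) \<longlonglongrightarrow> form_l1 n (2*d) f"
    unfolding form_l1_def using lim by (intro tendsto_intros) auto
  then have "Bseq (\<lambda>m. form_l1 n (2*d) (g m))"
    by (intro convergent_imp_Bseq convergentI)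
  then obtain M where M: "\<forall>m. norm (form_l1 n (2*d) (g m)) \<le> M"
    by (auto elim: BseqE)
  have bound: "form_l1 n (2*d) (g m) \<le> M" for m
    using M[rule_format, of m] by (simp add: abs_le_iff)
  obtain B R where B: "\<And>m. B m \<in> psd_on_V n d i" "\<And>m. Gmap n d (B m) = g m"
    "\<And>m a b. a \<le> kdim n d \<Longrightarrow> b \<le> kdim n d \<Longrightarrow> \<bar>B m a b\<bar> \<le> R"
    by (rule Ccone_bounded_reps[of g, OF g bound]) blast
  obtain r A where r: "strict_mono r" "A \<in> psd_on_V n d i"
    "\<forall>a\<le>kdim n d. \<forall>b\<le>kdim n d. (\<lambda>m. B (r m) a b) \<longlonglongrightarrow> A a b"
    using B(1,3) by (rule psd_on_V_convergent_subseq)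
  have "Gmap n d A \<gamma> = f \<gamma>" for \<gamma>
  proof (cases "\<gamma> \<in> exps n (2*d)")
    case True
    have "(\<lambda>m. g (r m) \<gamma>) \<longlonglongrightarrow> f \<gamma>"
      using LIMSEQ_subseq_LIMSEQ[OF lim[rule_format, OF True] r(1)] by (simp add: o_def)
    then show ?thesis using Gmap_tendsto[OF r(3), of \<gamma>] B(2) LIMSEQ_unique by auto
  next
    case False
    then show ?thesis using Gmap_forms[of n d A] f by (simp add: forms_def)
  qed
  then show ?thesis unfolding Ccone_eq using f r(2) by blast
qed

definition coeff_box :: "nat \<Rightarrow> nat \<Rightarrow> ((nat \<Rightarrow> nat) \<Rightarrow> real) \<Rightarrow> real \<Rightarrow> ((nat \<Rightarrow> nat) \<Rightarrow> real) set" where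
  "coeff_box n l f \<delta> = {g \<in> forms n l. \<forall>\<gamma>\<in>exps n l. \<bar>g \<gamma> - f \<gamma>\<bar> < \<delta>}"

lemma openin_coeff_box: "openin (top_of_set (forms n l)) (coeff_box n l f \<delta>)"
proof -
  have "open {g::(nat \<Rightarrow> nat) \<Rightarrow> real. \<bar>g \<gamma> - f \<gamma>\<bar> < \<delta>}" for \<gamma>
    by (intro open_Collect_less continuous_intros continuous_on_product_coordinates)
  then have "open (\<Inter>\<gamma>\<in>exps n l. {g::(nat \<Rightarrow> nat) \<Rightarrow> real. \<bar>g \<gamma> - f \<gamma>\<bar> < \<delta>})"
    by (intro open_INT finite_exps) auto
  moreover have "coeff_box n l f \<delta> = forms n l \<inter> (\<Inter>\<gamma>\<in>exps n l. {g. \<bar>g \<gamma> - f \<gamma>\<bar> < \<delta>})"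
    unfolding coeff_box_def by auto
  ultimately show ?thesis unfolding openin_open by blast
qed

lemma Ccone_subset_forms: "Ccone n d i \<subseteq> forms n (2*d)"
  unfolding Ccone_def by auto

lemma closedin_Ccone: "closedin (top_of_set (forms n (2*d))) (Ccone n d i)"
proof -
  have box: "\<exists>\<delta>>0. coeff_box n (2*d) f \<delta> \<inter> Ccone n d i = {}"
    if f: "f \<in> forms n (2*d)" "f \<notin> Ccone n d i" for f
  proof (rule ccontr)
    assume "\<not> ?thesis"
    then have "\<forall>m. \<exists>h. h \<in> Ccone n d i \<and> h \<in> coeff_box n (2*d) f (inverse (real (Suc m)))"
      by (metis disjoint_iff inverse_positive_iff_positive of_nat_0_less_iff zero_less_Suc)
    then obtain h where h: "\<forall>m. h m \<in> Ccone n d i \<and> h m \<in> coeff_box n (2*d) f (inverse (real (Suc m)))"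
      by (rule choice[THEN exE])
    have "(\<lambda>m. h m \<gamma>) \<longlonglongrightarrow> f \<gamma>" if "\<gamma> \<in> exps n (2*d)" for \<gamma>
    proof -
      have "\<forall>m. norm (h m \<gamma> - f \<gamma>) \<le> inverse (real (Suc m))"
        using h that unfolding coeff_box_def by (auto intro: less_imp_le)
      then have "(\<lambda>m. h m \<gamma> - f \<gamma>) \<longlonglongrightarrow> 0"
        by (rule Lim_null_comparison[OF always_eventually LIMSEQ_inverse_real_of_nat])
      then show ?thesis by (simp add: LIM_zero_iff)
    qed
    then have "f \<in> Ccone n d i"
      using h by (intro Ccone_closed_sequentially[of h, OF _ f(1)]) auto
    with f(2) show False ..
  qed
  have "openin (top_of_set (forms n (2*d))) (forms n (2*d) - Ccone n d i)"
  proof (subst openin_subopen, intro ballI)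
    fix f assume "f \<in> forms n (2*d) - Ccone n d i"
    then obtain \<delta> where "\<delta> > 0" "coeff_box n (2*d) f \<delta> \<inter> Ccone n d i = {}"
      using box by blast
    then show "\<exists>T. openin (top_of_set (forms n (2*d))) T \<and> f \<in> T \<and> T \<subseteq> forms n (2*d) - Ccone n d i"
      using openin_coeff_box \<open>f \<in> forms n (2*d) - Ccone n d i\<close>
      by (intro exI[of _ "coeff_box n (2*d) f \<delta>"]) (auto simp: coeff_box_def)
  qed
  then show ?thesis using Ccone_subset_forms by (simp add: closedin_def)
qed

section \<open>The interior of \<open>C\<^sub>i\<close>\<close>

lemma Gmap_preimage_bounded:
  assumes "g \<in> forms n (2*d)"
  obtains D where "D \<in> symmat (kdim n d)" "Gmap n d D = g" "mat_l1 (kdim n d) D \<le> form_l1 n (2*d) g"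
proof -
  let ?K = "kdim n d" and ?E = "exps n (2*d)"
  have "\<forall>\<gamma>\<in>?E. \<exists>E. E \<in> symmat ?K \<and> (\<forall>\<gamma>'. Gmap n d E \<gamma>' = (if \<gamma>' = \<gamma> then 1 else 0)) \<and> mat_l1 ?K E \<le> 1"
    by (metis Gmap_monomial_preimage)
  then obtain E where E: "\<And>\<gamma>. \<gamma> \<in> ?E \<Longrightarrow> E \<gamma> \<in> symmat ?K"
    "\<And>\<gamma> \<gamma>'. \<gamma> \<in> ?E \<Longrightarrow> Gmap n d (E \<gamma>) \<gamma>' = (if \<gamma>' = \<gamma> then 1 else 0)"
    "\<And>\<gamma>. \<gamma> \<in> ?E \<Longrightarrow> mat_l1 ?K (E \<gamma>) \<le> 1"
    by (metis bchoice)
  define D where "D = (\<lambda>a b. \<Sum>\<gamma>\<in>?E. g \<gamma> * E \<gamma> a b)"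
  show ?thesis
  proof (rule that)
    show "D \<in> symmat ?K"
      using E(1) unfolding symmat_def D_def by (auto intro!: sum.neutral sum.cong)
    have "Gmap n d D \<gamma>' = g \<gamma>'" for \<gamma>'
    proof -
      have "Gmap n d D \<gamma>' = (\<Sum>\<gamma>\<in>?E. if \<gamma> = \<gamma>' then g \<gamma> else 0)"
        unfolding D_def Gmap_sum using E(2) by (intro sum.cong) auto
      also have "\<dots> = g \<gamma>'" using assms by (auto simp: finite_exps forms_def)
      finally show ?thesis .
    qed
    then show "Gmap n d D = g" ..
    have "mat_l1 ?K D \<le> (\<Sum>a\<le>?K. \<Sum>b\<le>?K. \<Sum>\<gamma>\<in>?E. \<bar>g \<gamma>\<bar> * \<bar>E \<gamma> a b\<bar>)"
      unfolding mat_l1_def D_def by (intro sum_mono order_trans[OF sum_abs]) (simp add: abs_mult)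
    also have "\<dots> = (\<Sum>\<gamma>\<in>?E. \<bar>g \<gamma>\<bar> * mat_l1 ?K (E \<gamma>))"
      unfolding mat_l1_def sum_distrib_left by (subst sum.swap, rule sum.cong, simp, rule sum.swap)
    also have "\<dots> \<le> (\<Sum>\<gamma>\<in>?E. \<bar>g \<gamma>\<bar>)"
      using E(3) by (intro sum_mono) (simp add: mult_left_le)
    finally show "mat_l1 ?K D \<le> form_l1 n (2*d) g" unfolding form_l1_def .
  qed
qed

lemma interior_of_forms_shift:
  assumes f: "f \<in> top_of_set (forms n l) interior_of S" and h: "h \<in> forms n l"
  obtains \<epsilon> where "\<epsilon> > 0" "(\<lambda>\<gamma>. f \<gamma> - \<epsilon> * h \<gamma>) \<in> S"
proof -
  obtain U where U: "open U" "f \<in> forms n l \<inter> U" "forms n l \<inter> U \<subseteq> S"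
    using f unfolding interior_of_def openin_open by blast
  define \<phi> where "\<phi> = (\<lambda>\<epsilon>::real. \<lambda>\<gamma>. f \<gamma> - \<epsilon> * h \<gamma>)"
  have "continuous_on UNIV \<phi>"
    unfolding \<phi>_def by (intro continuous_on_coordinatewise_then_product continuous_intros)
  then have "open (\<phi> -` U)" using U(1) by (simp add: continuous_on_open_vimage)
  moreover have "0 \<in> \<phi> -` U" using U(2) by (simp add: \<phi>_def)
  ultimately obtain e where e: "0 < e" "ball 0 e \<subseteq> \<phi> -` U" using open_contains_ball by blast
  have "e / 2 \<in> ball 0 e" using e(1) by simp
  then have "\<phi> (e / 2) \<in> U" using e(2) by blast
  moreover have "\<phi> (e / 2) \<in> forms n l" using U(2) h by (auto simp: forms_def \<phi>_def)
  ultimately show ?thesis using that[of "e / 2"] e(1) U(3) by (auto simp: \<phi>_def)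
qed

lemma pos_rep_if_interior_Ccone:
  assumes "f \<in> top_of_set (forms n (2*d)) interior_of Ccone n d i"
  shows "\<exists>A\<in>symmat (kdim n d). Gmap n d A = f \<and> (\<forall>z\<in>Vreal n d i. 0 < qform (kdim n d) A z)"
proof -
  let ?K = "kdim n d"
  define I where "I = (\<lambda>a b. if a = b \<and> a \<le> ?K then 1 else (0::real))"
  obtain \<epsilon> where \<epsilon>: "\<epsilon> > 0" "(\<lambda>\<gamma>. f \<gamma> - \<epsilon> * Gmap n d I \<gamma>) \<in> Ccone n d i"
    using interior_of_forms_shift[OF assms Gmap_forms] .
  then obtain B where B: "B \<in> psd_on_V n d i" "Gmap n d B = (\<lambda>\<gamma>. f \<gamma> - \<epsilon> * Gmap n d I \<gamma>)"
    unfolding Ccone_eq by blast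
  define A where "A = (\<lambda>a b. B a b + \<epsilon> * I a b)"
  have "A \<in> symmat ?K"
    using B(1) by (auto simp: A_def I_def psd_on_V_def symmat_def)
  moreover have "Gmap n d A = f"
    unfolding A_def Gmap_add B(2) by simp
  moreover have "0 < qform ?K A z" if "z \<in> Vreal n d i" for z
  proof -
    have "qform ?K A z = qform ?K B z + \<epsilon> * sq_norm ?K z"
      unfolding A_def qform_add I_def qform_eq_sq_norm ..
    moreover have "0 \<le> qform ?K B z" using B(1) that by (simp add: psd_on_V_def)
    moreover have "0 < sq_norm ?K z" using Vreal_nonzero[OF that] by (rule sq_norm_pos)
    ultimately show ?thesis using \<epsilon>(1) by (simp add: add_nonneg_pos)
  qed
  ultimately show ?thesis by blast
qed

text \<open>A strictly positive representative dominates a multiple of \<open>|z|\<^sup>2\<close> on \<open>V\<^sub>i(\<real>)\<close>, which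
  absorbs the perturbation by a small representative of \<open>g - f\<close>.\<close>
lemma interior_Ccone_if_pos_rep:
  assumes A0: "A0 \<in> symmat (kdim n d)" "\<forall>z\<in>Vreal n d i. 0 < qform (kdim n d) A0 z"
  shows "Gmap n d A0 \<in> top_of_set (forms n (2*d)) interior_of Ccone n d i"
proof -
  let ?K = "kdim n d" and ?f = "Gmap n d A0"
  obtain c where c: "0 < c" "\<forall>z\<in>Vreal n d i. c * sq_norm ?K z \<le> qform ?K A0 z"
    using qform_coercive[OF A0(2)] by blast
  define \<delta> where "\<delta> = c / (real (card (exps n (2*d))) + 1)"
  have "0 < \<delta>" using c(1) by (simp add: \<delta>_def)
  have "coeff_box n (2*d) ?f \<delta> \<subseteq> Ccone n d i"
  proof
    fix g assume g: "g \<in> coeff_box n (2*d) ?f \<delta>"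
    then have "(\<lambda>\<gamma>. g \<gamma> - ?f \<gamma>) \<in> forms n (2*d)"
      using Gmap_forms[of n d A0] by (auto simp: coeff_box_def forms_def)
    then obtain D where D: "D \<in> symmat ?K" "Gmap n d D = (\<lambda>\<gamma>. g \<gamma> - ?f \<gamma>)"
      "mat_l1 ?K D \<le> form_l1 n (2*d) (\<lambda>\<gamma>. g \<gamma> - ?f \<gamma>)"
      by (rule Gmap_preimage_bounded)
    have "form_l1 n (2*d) (\<lambda>\<gamma>. g \<gamma> - ?f \<gamma>) \<le> real (card (exps n (2*d))) * \<delta>"
      using g sum_bounded_above[of "exps n (2*d)" "\<lambda>\<gamma>. \<bar>g \<gamma> - ?f \<gamma>\<bar>" \<delta>]
      by (force simp: coeff_box_def form_l1_def)
    also have "\<dots> < c"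
      using c(1) by (simp add: \<delta>_def field_simps)
    finally have "mat_l1 ?K D < c" using D(3) by linarith
    define A where "A = (\<lambda>a b. A0 a b + 1 * D a b)"
    have "A \<in> symmat ?K" using A0(1) D(1) by (auto simp: A_def symmat_def)
    moreover have "Gmap n d A = g"
      unfolding A_def Gmap_add D(2) by simp
    moreover have "0 \<le> qform ?K A z" if "z \<in> Vreal n d i" for z
    proof -
      have "qform ?K A z = qform ?K A0 z + qform ?K D z" unfolding A_def qform_add by simp
      moreover have "mat_l1 ?K D * sq_norm ?K z \<le> c * sq_norm ?K z"
        using \<open>mat_l1 ?K D < c\<close> by (intro mult_right_mono) (auto simp: sq_norm_def intro: sum_nonneg)
      ultimately show ?thesis using c(2) that qform_abs_le[of ?K D z] by fastforce
    qed
    ultimately show "g \<in> Ccone n d i"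
      using g unfolding Ccone_def coeff_box_def by blast
  qed
  moreover have "?f \<in> coeff_box n (2*d) ?f \<delta>"
    using Gmap_forms \<open>0 < \<delta>\<close> by (simp add: coeff_box_def)
  ultimately show ?thesis
    unfolding interior_of_def by (intro CollectI exI[of _ "coeff_box n (2*d) ?f \<delta>"] conjI openin_coeff_box)
qed

theorem corollary2p6:
  fixes n d i :: nat
  assumes "n \<ge> 1" and "d \<ge> 1" and "i \<le> kdim n d - n"
  shows "(top_of_set (forms n (2*d))) frontier_of (Ccone n d i) =
         {f \<in> Ccone n d i. \<forall>A\<in>symmat (kdim n d). Gmap n d A = f \<longrightarrow>
              (\<exists>z\<in>Vreal n d i. qform (kdim n d) A z \<le> 0)}"
proof -
  let ?X = "top_of_set (forms n (2*d))"
  have "?X frontier_of Ccone n d i = Ccone n d i - ?X interior_of Ccone n d i"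
    unfolding frontier_of_def closure_of_closedin[OF closedin_Ccone] ..
  also have "?X interior_of Ccone n d i =
      {f. \<exists>A\<in>symmat (kdim n d). Gmap n d A = f \<and> (\<forall>z\<in>Vreal n d i. 0 < qform (kdim n d) A z)}"
    using pos_rep_if_interior_Ccone interior_Ccone_if_pos_rep by blast
  finally show ?thesis by (auto simp flip: not_less)
qed

end
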